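(* Assume there exists a sequence $u_r>0$ ($r\ge0$) with $\sum_{r\ge1}u_r^{-1}<\infty$ and $\sum_{r\ge1}p_rN_{r-1}u_{r-1}u_r<\infty$. Then for every $\omega\in\mathbb R^X$ and every $x\in X$, the spectral measure $\mu_x^\omega$ of $H_\omega=\Delta+V_\omega$ and $\delta_x$ satisfies $$\int_{\mathbb R}\frac{d\mu_x^\omega(\lambda)}{(e-\lambda)^2}<\infty\quad\text{for Lebesgue-a.e. } e\in\mathbb R.$$
   Context: $(X,\mathbf P,\mathbf n)$ is a hierarchical structure: $X$ infinite countable, $\mathbf n=(n_r)_{r\ge0}$ positive integers, $\mathcal P_r$ partitions of $X$ ("clusters of rank $r$") with $n_0=1$ and rank-0 clusters singletons, every rank-$r$ cluster ($r\ge1$) a disjoint union of exactly $n_r$ rank-$(r-1)$ clusters, and any two points in a common cluster of some rank. $N_r=\prod_{s=0}^rn_s$, $Q_r(x)$ is the rank-$r$ cluster containing $x$, $d(x,y)=\min\{r:y\in Q_r(x)\}$, $(E_r\psi)(x)=\frac1{N_r}\sum_{d(x,y)\le r}\psi(y)$; $(p_r)_{r\ge1}$ positive with $\sum p_r=1$, $p_0=0$, $\Delta=\sum_{r\ge0}p_rE_r$ on $\ell^2(X)$. For $\omega\in\mathbb R^X$, $V_\omega$ is the self-adjoint multiplication operator by $\omega(x)$ and $H_\omega=\Delta+V_\omega$. $\mu_x^\omega$ is the Borel probability measure with $\langle\delta_x,f(H_\omega)\delta_x\rangle=\int f\,d\mu_x^\omega$ for bounded Borel $f$. *)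

theory Defs
  imports "HOL-Probability.Probability" "HOL-Library.Disjoint_Sets"
begin

definition hierarchical_structure :: "(nat \<Rightarrow> 'x set set) \<Rightarrow> (nat \<Rightarrow> nat) \<Rightarrow> bool" where
  "hierarchical_structure P n \<longleftrightarrow>
     infinite (UNIV :: 'x set) \<and>
     (\<forall>r. n r > 0) \<and> n 0 = 1 \<and>
     (\<forall>r. partition_on (UNIV :: 'x set) (P r)) \<and>
     P 0 = {{x} | x. True} \<and>
     (\<forall>r\<ge>1. \<forall>C\<in>P r. \<exists>S\<subseteq>P (r - 1). card S = n r \<and> C = \<Union>S) \<and>
     (\<forall>x y. \<exists>r. \<exists>C\<in>P r. x \<in> C \<and> y \<in> C)"

definition cluster :: "(nat \<Rightarrow> 'x set set) \<Rightarrow> nat \<Rightarrow> 'x \<Rightarrow> 'x set" where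
  "cluster P r x = (THE C. C \<in> P r \<and> x \<in> C)"

definition NN :: "(nat \<Rightarrow> nat) \<Rightarrow> nat \<Rightarrow> nat" where
  "NN n r = (\<Prod>s\<le>r. n s)"

definition hdist :: "(nat \<Rightarrow> 'x set set) \<Rightarrow> 'x \<Rightarrow> 'x \<Rightarrow> nat" where
  "hdist P x y = (LEAST r. y \<in> cluster P r x)"

definition Eop :: "(nat \<Rightarrow> 'x set set) \<Rightarrow> (nat \<Rightarrow> nat) \<Rightarrow> nat \<Rightarrow> ('x \<Rightarrow> complex) \<Rightarrow> 'x \<Rightarrow> complex" where
  "Eop P n r \<psi> x = (1 / of_nat (NN n r)) * (\<Sum>y\<in>{y. hdist P x y \<le> r}. \<psi> y)"

definition Lap :: "(nat \<Rightarrow> 'x set set) \<Rightarrow> (nat \<Rightarrow> nat) \<Rightarrow> (nat \<Rightarrow> real) \<Rightarrow> ('x \<Rightarrow> complex) \<Rightarrow> 'x \<Rightarrow> complex" where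
  "Lap P n p \<psi> x = (\<Sum>r. complex_of_real (p r) * Eop P n r \<psi> x)"

definition weights_ok :: "(nat \<Rightarrow> real) \<Rightarrow> bool" where
  "weights_ok p \<longleftrightarrow> p 0 = 0 \<and> (\<forall>r\<ge>1. p r > 0) \<and> p sums 1"

definition l2 :: "('x \<Rightarrow> complex) \<Rightarrow> bool" where
  "l2 \<psi> \<longleftrightarrow> (\<lambda>x. (cmod (\<psi> x))\<^sup>2) summable_on UNIV"

text \<open>Domain of the self-adjoint operator H_omega = Delta + V_omega (Delta is bounded).\<close>
definition Hdom :: "('x \<Rightarrow> real) \<Rightarrow> ('x \<Rightarrow> complex) \<Rightarrow> bool" where
  "Hdom \<omega> \<psi> \<longleftrightarrow> l2 \<psi> \<and> l2 (\<lambda>x. complex_of_real (\<omega> x) * \<psi> x)"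

definition Hop :: "(nat \<Rightarrow> 'x set set) \<Rightarrow> (nat \<Rightarrow> nat) \<Rightarrow> (nat \<Rightarrow> real) \<Rightarrow> ('x \<Rightarrow> real) \<Rightarrow> ('x \<Rightarrow> complex) \<Rightarrow> 'x \<Rightarrow> complex" where
  "Hop P n p \<omega> \<psi> x = Lap P n p \<psi> x + complex_of_real (\<omega> x) * \<psi> x"

text \<open>mu is the spectral measure of H_omega and delta_x: a Borel probability measure on R with
  <delta_x, f(H) delta_x> = integral f dmu, here for the resolvent functions f(l) = 1/(l - z),
  Im z /= 0, which determine mu uniquely (Stieltjes inversion).  (H - z)^(-1) delta_x is the
  unique phi in the domain with (H - z) phi = delta_x.\<close>
definition spectral_measure ::
  "(nat \<Rightarrow> 'x set set) \<Rightarrow> (nat \<Rightarrow> nat) \<Rightarrow> (nat \<Rightarrow> real) \<Rightarrow> ('x \<Rightarrow> real) \<Rightarrow> 'x \<Rightarrow> real measure \<Rightarrow> bool" where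
  "spectral_measure P n p \<omega> x \<mu> \<longleftrightarrow>
     prob_space \<mu> \<and> sets \<mu> = sets borel \<and>
     (\<forall>z. Im z \<noteq> 0 \<longrightarrow>
        (\<exists>\<phi>. Hdom \<omega> \<phi> \<and>
              (\<forall>y. Hop P n p \<omega> \<phi> y - z * \<phi> y = (if y = x then 1 else 0)) \<and>
              \<phi> x = (\<integral>l. 1 / (complex_of_real l - z) \<partial>\<mu>)))"

end

theory Submission
  imports Defs
begin

text \<open>On the rank-\<open>R\<close> cluster \<open>Q\<^sub>R(x)\<close> the operator \<open>H\<^sub>\<omega>\<close> acts as a finite symmetric
  matrix \<open>A\<^sub>R\<close> plus a constant, the contribution of the ranks above \<open>R\<close>, and on \<open>Q\<^sub>R\<^sub>+\<^sub>1(x)\<close> every entry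
  of \<open>A\<^sub>R\<^sub>+\<^sub>1\<close> exceeds the corresponding entry of \<open>A\<^sub>R\<close> by \<open>p\<^sub>R\<^sub>+\<^sub>1/N\<^sub>R\<^sub>+\<^sub>1\<close>, a rank-one
  perturbation.  Diagonalising \<open>A\<^sub>R\<close>, the energies within \<open>1/(N\<^sub>R u\<^sub>R)\<close> of its spectrum, or where the
  resolvent of \<open>A\<^sub>R\<close> maps the vector of ones to a vector of norm above \<open>N\<^sub>R u\<^sub>R\<close>, form a set of
  measure \<open>O(1/u\<^sub>R)\<close>; by Borel--Cantelli almost every \<open>e\<close> avoids these sets for all large \<open>R\<close>.
  For such \<open>e\<close> and \<open>z = e + i\<epsilon>\<close>, the rank-one recursion bounds \<open>\<parallel>(A\<^sub>R - z)\<inverse> \<delta>\<^sub>x\<parallel>\<close>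
  uniformly in \<open>R\<close> and \<open>\<epsilon>\<close> by \<open>exp (\<Sum>\<^sub>r p\<^sub>r\<^sub>+\<^sub>1 N\<^sub>r u\<^sub>r u\<^sub>r\<^sub>+\<^sub>1)\<close>; comparing with \<open>H\<^sub>\<omega>\<close> at ranks
  where \<open>u\<close> attains its future minimum (so that the neglected tail is small) gives
  \<open>Im \<langle>\<delta>\<^sub>x, (H\<^sub>\<omega> - z)\<inverse> \<delta>\<^sub>x\<rangle> \<le> C \<epsilon>\<close>.  As this imaginary part equals
  \<open>\<epsilon> \<integral> d\<mu>(\<lambda>) / ((\<lambda> - e)\<^sup>2 + \<epsilon>\<^sup>2)\<close>, monotone convergence bounds \<open>\<integral> d\<mu>(\<lambda>) / (e - \<lambda>)\<^sup>2\<close> by \<open>C\<close>.\<close>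

section \<open>Hierarchical structures\<close>

locale hierarchy =
  fixes P :: "nat \<Rightarrow> 'x set set" and n :: "nat \<Rightarrow> nat"
  assumes hierarchical: "hierarchical_structure P n"
begin

abbreviation Q where "Q \<equiv> cluster P"

lemma partition_clusters: "partition_on UNIV (P r)"
  using hierarchical unfolding hierarchical_structure_def by (elim conjE) (erule allE)

lemma n_pos: "n r > 0"
  using hierarchical unfolding hierarchical_structure_def by (elim conjE) (erule allE)

lemma NN_pos: "NN n r > 0"
  unfolding NN_def using n_pos by (simp add: prod_pos)

lemma NN_Suc: "NN n (Suc r) = NN n r * n (Suc r)"
  unfolding NN_def by simp

lemma NN_mono: "r \<le> s \<Longrightarrow> NN n r \<le> NN n s"
proof (induction s rule: dec_induct)
  case (step m)
  have "NN n m \<le> NN n m * n (Suc m)" using n_pos[of "Suc m"] by simp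
  then show ?case unfolding NN_Suc using step.IH by linarith
qed simp

lemma cluster_Suc_Union:
  assumes "C \<in> P (Suc r)" shows "\<exists>S\<subseteq>P r. card S = n (Suc r) \<and> C = \<Union>S"
proof -
  have "\<forall>r\<ge>1. \<forall>C\<in>P r. \<exists>S\<subseteq>P (r - 1). card S = n r \<and> C = \<Union>S"
    using hierarchical unfolding hierarchical_structure_def by (elim conjE)
  from this[rule_format, of "Suc r" C] show ?thesis using assms by simp
qed

lemma ex1_cluster: "\<exists>!C. C \<in> P r \<and> y \<in> C"
proof -
  have "y \<in> \<Union>(P r)" using partition_onD1[OF partition_clusters[of r], symmetric] by simp
  then obtain C where C: "C \<in> P r" "y \<in> C" by (rule UnionE)
  have unique: "D = C" if "D \<in> P r" "y \<in> D" for D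
  proof (rule ccontr)
    assume "D \<noteq> C"
    then have "D \<inter> C = {}" using partition_onD2[OF partition_clusters[of r]] C that
      by (meson disjointD)
    then show False using C that by blast
  qed
  show ?thesis using C unique by blast
qed

lemma cluster_in: "Q r y \<in> P r" and mem_cluster: "y \<in> Q r y"
  using theI'[OF ex1_cluster[of r y]] unfolding cluster_def by auto

lemma cluster_eqI: "C \<in> P r \<Longrightarrow> y \<in> C \<Longrightarrow> Q r y = C"
  using ex1_cluster[of r y] cluster_in mem_cluster by blast

lemma cluster_eq_if_mem: "y' \<in> Q r y \<Longrightarrow> Q r y' = Q r y"
  using cluster_eqI cluster_in by blast

lemma mem_cluster_commute: "y' \<in> Q r y \<longleftrightarrow> y \<in> Q r y'"
  using cluster_eq_if_mem mem_cluster by metis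

lemma cluster_subset_Suc: "Q r y \<subseteq> Q (Suc r) y"
proof -
  obtain S where S: "S \<subseteq> P r" "Q (Suc r) y = \<Union>S"
    using cluster_Suc_Union[OF cluster_in[of "Suc r" y]] by auto
  have "y \<in> \<Union>S" using S(2) mem_cluster by metis
  then obtain D where D: "D \<in> S" "y \<in> D" by (rule UnionE)
  then have "D = Q r y" using cluster_eqI[of D r y] S(1) by auto
  then show ?thesis using S(2) D(1) by auto
qed

lemma cluster_mono: "r \<le> s \<Longrightarrow> Q r y \<subseteq> Q s y"
  by (induction s rule: dec_induct) (use cluster_subset_Suc order_trans in blast)+

lemma card_cluster: "finite (Q r y) \<and> card (Q r y) = NN n r"
proof (induction r arbitrary: y)
  case 0
  have P0: "P 0 = {{x} | x. True}"
    using hierarchical unfolding hierarchical_structure_def by (elim conjE)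
  have n0: "n 0 = 1"
    using hierarchical unfolding hierarchical_structure_def by (elim conjE)
  have "Q 0 y = {y}" using cluster_eqI[of "{y}" 0 y] P0 by auto
  then show ?case using n0 by (simp add: NN_def)
next
  case (Suc r)
  obtain S where S: "S \<subseteq> P r" "card S = n (Suc r)" "Q (Suc r) y = \<Union>S"
    using cluster_Suc_Union[OF cluster_in] by blast
  have "card S > 0" using S(2) n_pos[of "Suc r"] by simp
  then have finS: "finite S" by (rule card_ge_0_finite)
  have D: "finite D \<and> card D = NN n r" if "D \<in> S" for D
  proof -
    have "D \<in> P r" using that S by auto
    moreover have "D \<noteq> {}" using partition_clusters[of r] \<open>D \<in> P r\<close> unfolding partition_on_def by auto
    then obtain d where "d \<in> D" by auto
    ultimately have "D = Q r d" using cluster_eqI by auto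
    then show ?thesis using Suc by auto
  qed
  have disj: "disjoint S" using partition_clusters[of r] S(1) unfolding partition_on_def
    by (meson pairwise_subset)
  have "card (\<Union>S) = (\<Sum>D\<in>S. card D)"
    by (rule card_Union_disjoint[OF disj]) (use D in auto)
  also have "\<dots> = NN n r * n (Suc r)" using D S(2) by simp
  finally show ?case using S(3) NN_Suc finS D by auto
qed

lemma finite_cluster: "finite (Q r y)"
  using card_cluster by blast

lemma hdist_le_iff: "hdist P y y' \<le> r \<longleftrightarrow> y' \<in> Q r y"
proof
  have "\<exists>r0. \<exists>C\<in>P r0. y \<in> C \<and> y' \<in> C"
    using hierarchical unfolding hierarchical_structure_def by (elim conjE) (erule allE)+
  then obtain r0 C where "C \<in> P r0" "y \<in> C" "y' \<in> C" by blast
  then have "y' \<in> Q r0 y" using cluster_eqI by auto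
  then have "y' \<in> Q (hdist P y y') y" unfolding hdist_def by (rule LeastI)
  moreover assume "hdist P y y' \<le> r"
  ultimately show "y' \<in> Q r y" using cluster_mono by blast
next
  assume "y' \<in> Q r y"
  then show "hdist P y y' \<le> r" unfolding hdist_def by (rule Least_le)
qed

lemma Eop_eq_cluster_sum: "Eop P n r f y = (\<Sum>y'\<in>Q r y. f y') / of_nat (NN n r)"
proof -
  have "{y'. hdist P y y' \<le> r} = Q r y" using hdist_le_iff by blast
  then show ?thesis unfolding Eop_def by simp
qed

end

section \<open>Eigenbases of symmetric kernels on finite sets\<close>

definition inner_on :: "'a set \<Rightarrow> ('a \<Rightarrow> real) \<Rightarrow> ('a \<Rightarrow> real) \<Rightarrow> real" where
  "inner_on C f g = (\<Sum>y\<in>C. f y * g y)"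

definition supported_on :: "'a set \<Rightarrow> ('a \<Rightarrow> 'b::zero) \<Rightarrow> bool" where
  "supported_on C f \<longleftrightarrow> (\<forall>y. y \<notin> C \<longrightarrow> f y = 0)"

definition symmetric_on :: "'a set \<Rightarrow> ('a \<Rightarrow> 'a \<Rightarrow> real) \<Rightarrow> bool" where
  "symmetric_on C a \<longleftrightarrow> (\<forall>y\<in>C. \<forall>y'\<in>C. a y y' = a y' y)"

definition kernel_on :: "('a \<Rightarrow> 'a \<Rightarrow> real) \<Rightarrow> 'a set \<Rightarrow> ('a \<Rightarrow> real) \<Rightarrow> 'a \<Rightarrow> real" where
  "kernel_on a C f = (\<lambda>y. if y \<in> C then (\<Sum>y'\<in>C. a y y' * f y') else 0)"

lemma inner_on_commute: "inner_on C f g = inner_on C g f"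
  unfolding inner_on_def by (simp add: mult.commute)

lemma inner_on_add_right: "inner_on C f (\<lambda>y. g y + s * h y) = inner_on C f g + s * inner_on C f h"
  unfolding inner_on_def by (simp add: algebra_simps sum.distrib sum_distrib_left)

lemma inner_on_add_left: "inner_on C (\<lambda>y. g y + s * h y) f = inner_on C g f + s * inner_on C h f"
  unfolding inner_on_def by (simp add: algebra_simps sum.distrib sum_distrib_left)

lemma inner_on_diff_right: "inner_on C f (\<lambda>y. g y - s * h y) = inner_on C f g - s * inner_on C f h"
  unfolding inner_on_def by (simp add: algebra_simps sum_subtractf sum_distrib_left)

lemma inner_on_diff_left: "inner_on C (\<lambda>y. g y - s * h y) f = inner_on C g f - s * inner_on C h f"
  unfolding inner_on_def by (simp add: algebra_simps sum_subtractf sum_distrib_left)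

lemma inner_on_scale_left: "inner_on C (\<lambda>y. s * g y) f = s * inner_on C g f"
  unfolding inner_on_def by (simp add: algebra_simps sum_distrib_left)

lemma inner_on_scale_right: "inner_on C f (\<lambda>y. s * g y) = s * inner_on C f g"
  unfolding inner_on_def by (simp add: algebra_simps sum_distrib_left)

lemma inner_on_sum_left:
  "inner_on C (\<lambda>y. \<Sum>k<K. c k * v k y) g = (\<Sum>k<K. c k * inner_on C (v k) g)"
  unfolding inner_on_def
  by (simp add: sum_distrib_left sum_distrib_right mult.assoc sum.swap[of _ C])

lemma inner_on_sum_right:
  "inner_on C g (\<lambda>y. \<Sum>k<K. c k * v k y) = (\<Sum>k<K. c k * inner_on C g (v k))"
  using inner_on_sum_left[of C c v K g] by (simp add: inner_on_commute)

lemma inner_on_self_nonneg: "inner_on C f f \<ge> 0"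
  unfolding inner_on_def by (simp add: sum_nonneg)

lemma square_le_inner_on_self: "finite C \<Longrightarrow> y \<in> C \<Longrightarrow> f y * f y \<le> inner_on C f f"
  unfolding inner_on_def by (rule member_le_sum) auto

lemma inner_on_self_eq_0D: "finite C \<Longrightarrow> inner_on C f f = 0 \<Longrightarrow> y \<in> C \<Longrightarrow> f y = 0"
  unfolding inner_on_def by (simp add: sum_nonneg_eq_0_iff)

lemma inner_on_delta_right: "finite C \<Longrightarrow> x \<in> C \<Longrightarrow> inner_on C f (\<lambda>y. if y = x then 1 else 0) = f x"
  unfolding inner_on_def by (simp add: if_distrib cong: if_cong)

lemma inner_on_kernel_on_commute:
  assumes "symmetric_on C a"
  shows "inner_on C f (kernel_on a C g) = inner_on C (kernel_on a C f) g"
proof -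
  have "inner_on C f (kernel_on a C g) = (\<Sum>y\<in>C. \<Sum>y'\<in>C. f y * a y y' * g y')"
    unfolding inner_on_def kernel_on_def by (simp add: sum_distrib_left mult.assoc)
  also have "\<dots> = (\<Sum>y'\<in>C. \<Sum>y\<in>C. a y' y * f y * g y')"
    using assms unfolding symmetric_on_def by (subst sum.swap) (auto intro!: sum.cong)
  also have "\<dots> = inner_on C (kernel_on a C f) g"
    unfolding inner_on_def kernel_on_def by (simp add: sum_distrib_right)
  finally show ?thesis .
qed

lemma kernel_on_add: "kernel_on a C (\<lambda>y. f y + s * h y) = (\<lambda>y. kernel_on a C f y + s * kernel_on a C h y)"
  unfolding kernel_on_def by (auto simp: algebra_simps sum.distrib sum_distrib_left)

lemma kernel_on_scale: "kernel_on a C (\<lambda>y. c * f y) = (\<lambda>y. c * kernel_on a C f y)"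
  unfolding kernel_on_def by (auto simp: algebra_simps sum_distrib_left)

lemma eq_0_if_linear_le_quadratic:
  fixes b D :: real
  assumes "\<And>s. 2 * s * b \<le> s\<^sup>2 * D"
  shows "b = 0"
proof -
  have "b * b \<le> 0"
  proof (cases "D \<le> 0")
    case True
    have "2 * b * b \<le> b\<^sup>2 * D" using assms[of b] by simp
    also have "\<dots> \<le> 0" using True by (simp add: mult_nonneg_nonpos)
    finally show ?thesis by simp
  next
    case False
    have "2 * (b / D) * b \<le> (b / D)\<^sup>2 * D" by (rule assms)
    then show ?thesis using False by (simp add: power2_eq_square field_simps)
  qed
  then show ?thesis by (auto simp: mult_le_0_iff)
qed

text \<open>Perturbing the maximiser \<open>u\<close> in a direction of \<open>W\<close> orthogonal to it cannot increase the
  Rayleigh quotient, which forces the first-order term to vanish; hence \<open>u\<close> is an eigenvector.\<close>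

locale rayleigh_maximizer =
  fixes C :: "'a set" and a :: "'a \<Rightarrow> 'a \<Rightarrow> real" and W :: "('a \<Rightarrow> real) set" and u :: "'a \<Rightarrow> real"
  assumes finite: "finite C" and symmetric: "symmetric_on C a"
    and add_closed: "\<And>f h s. f \<in> W \<Longrightarrow> h \<in> W \<Longrightarrow> (\<lambda>y. f y + s * h y) \<in> W"
    and scale_closed: "\<And>f s. f \<in> W \<Longrightarrow> (\<lambda>y. s * f y) \<in> W"
    and invariant: "\<And>f. f \<in> W \<Longrightarrow> kernel_on a C f \<in> W"
    and mem: "u \<in> W" and unit: "inner_on C u u = 1"
    and maximal: "\<And>f. f \<in> W \<Longrightarrow> inner_on C f f = 1 \<Longrightarrow>
        inner_on C f (kernel_on a C f) \<le> inner_on C u (kernel_on a C u)"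
begin

definition rayleigh :: "('a \<Rightarrow> real) \<Rightarrow> real" where
  "rayleigh f = inner_on C f (kernel_on a C f)"

lemma rayleigh_scale: "rayleigh (\<lambda>y. c * f y) = c\<^sup>2 * rayleigh f"
  unfolding rayleigh_def kernel_on_scale inner_on_scale_left inner_on_scale_right
  by (simp add: power2_eq_square)

lemma rayleigh_le_inner_on_self:
  assumes "f \<in> W" "inner_on C f f > 0"
  shows "rayleigh f \<le> rayleigh u * inner_on C f f"
proof -
  define f0 where "f0 = (\<lambda>y. (1 / sqrt (inner_on C f f)) * f y)"
  have "inner_on C f0 f0 = 1"
    unfolding f0_def inner_on_scale_left inner_on_scale_right using assms(2)
    by (simp add: power2_eq_square[symmetric])
  moreover have "f0 \<in> W" unfolding f0_def by (rule scale_closed[OF assms(1)])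
  ultimately have "rayleigh f0 \<le> rayleigh u" using maximal unfolding rayleigh_def by blast
  moreover have "rayleigh f0 = rayleigh f / inner_on C f f"
    unfolding f0_def rayleigh_scale using assms(2) by (simp add: power_divide)
  ultimately show ?thesis using assms(2) by (simp add: divide_le_eq)
qed

lemma inner_on_kernel_orthogonal:
  assumes h: "h \<in> W" and hu: "inner_on C h u = 0"
  shows "inner_on C h (kernel_on a C u) = 0"
proof (rule eq_0_if_linear_le_quadratic)
  fix s
  define w where "w = (\<lambda>y. u y + s * h y)"
  have sym: "inner_on C u (kernel_on a C h) = inner_on C h (kernel_on a C u)"
    using inner_on_kernel_on_commute[OF symmetric, of u h] inner_on_commute[of C "kernel_on a C u" h]
    by simp
  have ww: "inner_on C w w = 1 + s\<^sup>2 * inner_on C h h"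
    unfolding w_def inner_on_add_left inner_on_add_right using unit hu inner_on_commute[of C h u]
    by (simp add: power2_eq_square algebra_simps)
  moreover have "inner_on C w w > 0"
    unfolding ww using inner_on_self_nonneg[of C h] by (simp add: add_pos_nonneg)
  ultimately have "rayleigh w \<le> rayleigh u * (1 + s\<^sup>2 * inner_on C h h)"
    using rayleigh_le_inner_on_self[of w] add_closed[OF mem h] unfolding w_def by simp
  moreover have "rayleigh w = rayleigh u + 2 * s * inner_on C h (kernel_on a C u) + s\<^sup>2 * rayleigh h"
    unfolding rayleigh_def w_def kernel_on_add inner_on_add_left inner_on_add_right sym
    by (simp add: power2_eq_square algebra_simps)
  ultimately show "2 * s * inner_on C h (kernel_on a C u) \<le> s\<^sup>2 * (rayleigh u * inner_on C h h - rayleigh h)"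
    by (simp add: algebra_simps)
qed

lemma eigenvector: "y \<in> C \<Longrightarrow> (\<Sum>y'\<in>C. a y y' * u y') = rayleigh u * u y"
proof -
  define h where "h = (\<lambda>y. kernel_on a C u y - rayleigh u * u y)"
  have "h \<in> W" unfolding h_def using add_closed[OF invariant[OF mem] mem, of "- rayleigh u"] by simp
  have hu: "inner_on C h u = 0"
    unfolding h_def inner_on_diff_left using unit by (simp add: rayleigh_def inner_on_commute)
  have "inner_on C h h = inner_on C h (kernel_on a C u) - rayleigh u * inner_on C h u"
    unfolding h_def by (rule inner_on_diff_right)
  also have "\<dots> = 0" using inner_on_kernel_orthogonal[OF \<open>h \<in> W\<close> hu] hu by simp
  finally have "h y = 0" if "y \<in> C" for y using inner_on_self_eq_0D[OF finite _ that] by blast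
  then show "y \<in> C \<Longrightarrow> (\<Sum>y'\<in>C. a y y' * u y') = rayleigh u * u y"
    unfolding h_def kernel_on_def by auto
qed

end

definition orthonormal_eigenvectors ::
  "'a set \<Rightarrow> ('a \<Rightarrow> 'a \<Rightarrow> real) \<Rightarrow> nat \<Rightarrow> (nat \<Rightarrow> real) \<Rightarrow> (nat \<Rightarrow> 'a \<Rightarrow> real) \<Rightarrow> bool" where
  "orthonormal_eigenvectors C a K lam v \<longleftrightarrow>
     (\<forall>k<K. supported_on C (v k) \<and> (\<forall>y\<in>C. (\<Sum>y'\<in>C. a y y' * v k y') = lam k * v k y)) \<and>
     (\<forall>i<K. \<forall>j<K. inner_on C (v i) (v j) = (if i = j then 1 else 0))"

definition orthogonal_complement_on :: "'a set \<Rightarrow> nat \<Rightarrow> (nat \<Rightarrow> 'a \<Rightarrow> real) \<Rightarrow> ('a \<Rightarrow> real) set" where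
  "orthogonal_complement_on C K v = {f. supported_on C f \<and> (\<forall>k<K. inner_on C (v k) f = 0)}"

lemma inner_on_orthonormal_sum:
  assumes "orthonormal_eigenvectors C a K lam v" "j < K"
  shows "inner_on C (v j) (\<lambda>y. \<Sum>k<K. c k * v k y) = c j"
proof -
  have "inner_on C (v j) (\<lambda>y. \<Sum>k<K. c k * v k y) = (\<Sum>k<K. c k * (if j = k then 1 else 0))"
    unfolding inner_on_sum_right using assms unfolding orthonormal_eigenvectors_def
    by (intro sum.cong) auto
  also have "\<dots> = c j" using assms(2) by (simp add: if_distrib cong: if_cong)
  finally show ?thesis .
qed

lemma Bessel_inequality:
  assumes "orthonormal_eigenvectors C a K lam v"
  shows "(\<Sum>k<K. (inner_on C (v k) f)\<^sup>2) \<le> inner_on C f f"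
proof -
  define c where "c k = inner_on C (v k) f" for k
  define g where "g = (\<lambda>y. \<Sum>k<K. c k * v k y)"
  have gg: "inner_on C g g = (\<Sum>k<K. c k * c k)"
    unfolding g_def inner_on_sum_left using inner_on_orthonormal_sum[OF assms] by simp
  have gf: "inner_on C g f = (\<Sum>k<K. c k * c k)"
    unfolding g_def inner_on_sum_left c_def by simp
  have "0 \<le> inner_on C (\<lambda>y. f y - 1 * g y) (\<lambda>y. f y - 1 * g y)" by (rule inner_on_self_nonneg)
  also have "\<dots> = inner_on C f f - (\<Sum>k<K. c k * c k)"
    unfolding inner_on_diff_left inner_on_diff_right using gg gf inner_on_commute[of C f g] by simp
  finally show ?thesis unfolding c_def by (simp add: power2_eq_square)
qed

lemma orthonormal_eigenvectors_le_card:
  assumes "finite C" and orth: "orthonormal_eigenvectors C a K lam v"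
  shows "K \<le> card C"
proof -
  have "(\<Sum>k<K. (v k y)\<^sup>2) \<le> 1" if "y \<in> C" for y
  proof -
    define d where "d = (\<lambda>y'. if y' = y then 1 else (0::real))"
    have "inner_on C (v k) d = v k y" for k
      unfolding d_def by (rule inner_on_delta_right[OF assms(1) that])
    moreover have "inner_on C d d = 1"
      unfolding d_def using inner_on_delta_right[OF assms(1) that] by simp
    ultimately show ?thesis using Bessel_inequality[OF orth, of d] by simp
  qed
  then have "(\<Sum>y\<in>C. \<Sum>k<K. (v k y)\<^sup>2) \<le> (\<Sum>y\<in>C. 1)" by (rule sum_mono)
  moreover have "(\<Sum>y\<in>C. \<Sum>k<K. (v k y)\<^sup>2) = (\<Sum>k<K. inner_on C (v k) (v k))"
    unfolding inner_on_def by (subst sum.swap) (simp add: power2_eq_square)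
  moreover have "\<dots> = real K" using orth unfolding orthonormal_eigenvectors_def by simp
  ultimately show ?thesis by simp
qed

lemma continuous_on_apply: "continuous_on S (\<lambda>f. f y :: real)"
  by (rule continuous_on_subset[OF continuous_on_product_coordinates]) simp

lemma orthogonal_complement_on_add:
  "f \<in> orthogonal_complement_on C K v \<Longrightarrow> h \<in> orthogonal_complement_on C K v \<Longrightarrow>
    (\<lambda>y. f y + s * h y) \<in> orthogonal_complement_on C K v"
  unfolding orthogonal_complement_on_def supported_on_def by (auto simp: inner_on_add_right)

lemma orthogonal_complement_on_scale:
  "h \<in> orthogonal_complement_on C K v \<Longrightarrow> (\<lambda>y. s * h y) \<in> orthogonal_complement_on C K v"
  unfolding orthogonal_complement_on_def supported_on_def by (auto simp: inner_on_scale_right)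

lemma kernel_on_orthogonal_complement_on:
  assumes "symmetric_on C a" "orthonormal_eigenvectors C a K lam v" "f \<in> orthogonal_complement_on C K v"
  shows "kernel_on a C f \<in> orthogonal_complement_on C K v"
proof -
  have "kernel_on a C (v k) = (\<lambda>y. lam k * v k y)" if "k < K" for k
    using assms(2) that unfolding orthonormal_eigenvectors_def supported_on_def kernel_on_def by auto
  then have "inner_on C (v k) (kernel_on a C f) = 0" if "k < K" for k
    using assms(3) that inner_on_kernel_on_commute[OF assms(1), of "v k" f]
    unfolding orthogonal_complement_on_def by (simp add: inner_on_scale_left)
  then show ?thesis unfolding orthogonal_complement_on_def supported_on_def kernel_on_def by auto
qed

lemma closed_unit_sphere_orthogonal_complement_on:
  "closed {f \<in> orthogonal_complement_on C K v. inner_on C f f = 1}"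
proof -
  have "closed {f :: 'a \<Rightarrow> real. \<forall>y. y \<notin> C \<longrightarrow> f y = 0}"
  proof (intro closed_Collect_all closed_Collect_imp)
    show "open {f :: 'a \<Rightarrow> real. y \<notin> C}" for y by (cases "y \<in> C") auto
    show "closed {f :: 'a \<Rightarrow> real. f y = 0}" for y
      by (rule closed_Collect_eq) (rule continuous_on_apply, rule continuous_on_const)
  qed
  moreover have "closed {f :: 'a \<Rightarrow> real. \<forall>k. k < K \<longrightarrow> inner_on C (v k) f = 0}"
  proof (intro closed_Collect_all closed_Collect_imp)
    show "open {f :: 'a \<Rightarrow> real. k < K}" for k by (cases "k < K") auto
    show "closed {f :: 'a \<Rightarrow> real. inner_on C (v k) f = 0}" for k
      unfolding inner_on_def
      by (rule closed_Collect_eq) (intro continuous_on_sum continuous_on_mult continuous_on_const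
          continuous_on_apply, rule continuous_on_const)
  qed
  moreover have "closed {f :: 'a \<Rightarrow> real. inner_on C f f = 1}"
    unfolding inner_on_def
    by (rule closed_Collect_eq) (intro continuous_on_sum continuous_on_mult continuous_on_apply,
        rule continuous_on_const)
  moreover have "{f \<in> orthogonal_complement_on C K v. inner_on C f f = 1} = {f :: 'a \<Rightarrow> real. \<forall>y. y \<notin> C \<longrightarrow> f y = 0}
      \<inter> {f. \<forall>k. k < K \<longrightarrow> inner_on C (v k) f = 0} \<inter> {f. inner_on C f f = 1}"
    unfolding orthogonal_complement_on_def supported_on_def by auto
  ultimately show ?thesis by (simp add: closed_Int)
qed

lemma compact_unit_sphere_orthogonal_complement_on:
  assumes "finite C"
  shows "compact {f \<in> orthogonal_complement_on C K v. inner_on C f f = 1}"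
    (is "compact ?S")
proof -
  let ?B = "\<lambda>y. (if y \<in> C then {-1..1::real} else {0})"
  have "compactin (product_topology (\<lambda>i. euclidean) UNIV) (PiE UNIV ?B)"
    by (subst compactin_PiE) auto
  then have box: "compact {f. \<forall>y. f y \<in> ?B y}"
    unfolding PiE_UNIV_domain Pi_def by (simp add: euclidean_product_topology)
  have sub: "?S \<subseteq> {f. \<forall>y. f y \<in> ?B y}"
  proof (clarify)
    fix f y assume "f \<in> orthogonal_complement_on C K v" "inner_on C f f = 1"
    then show "f y \<in> ?B y"
      using square_le_inner_on_self[OF assms, of y f] abs_le_square_iff[of "f y" 1]
      unfolding orthogonal_complement_on_def supported_on_def by (auto simp: power2_eq_square)
  qed
  have "closed ?S" by (rule closed_unit_sphere_orthogonal_complement_on)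
  with box have "compact ({f. \<forall>y. f y \<in> ?B y} \<inter> ?S)" by (rule compact_Int_closed)
  then show ?thesis by (simp only: Int_absorb1[OF sub])
qed

lemma continuous_on_inner_on_kernel_on: "continuous_on S (\<lambda>f. inner_on C f (kernel_on a C f))"
proof -
  have "(\<lambda>f. inner_on C f (kernel_on a C f)) = (\<lambda>f. \<Sum>y\<in>C. f y * (\<Sum>y'\<in>C. a y y' * f y'))"
    unfolding inner_on_def kernel_on_def by (intro ext sum.cong) auto
  then show ?thesis
    by (simp only:) (intro continuous_on_sum continuous_on_mult continuous_on_const continuous_on_apply)
qed

lemma eigenvector_in_orthogonal_complement_on:
  assumes "finite C" "symmetric_on C a" and orth: "orthonormal_eigenvectors C a K lam v"
    and g: "g \<in> orthogonal_complement_on C K v" "g y0 \<noteq> 0"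
  shows "\<exists>u l. u \<in> orthogonal_complement_on C K v \<and> inner_on C u u = 1 \<and>
           (\<forall>y\<in>C. (\<Sum>y'\<in>C. a y y' * u y') = l * u y)"
proof -
  let ?W = "orthogonal_complement_on C K v"
  let ?S = "{f \<in> ?W. inner_on C f f = 1}"
  have "y0 \<in> C" using g unfolding orthogonal_complement_on_def supported_on_def by blast
  then have "inner_on C g g \<noteq> 0" using inner_on_self_eq_0D[OF assms(1)] g(2) by blast
  then have gpos: "inner_on C g g > 0" using inner_on_self_nonneg[of C g] by simp
  define g0 where "g0 = (\<lambda>y. (1 / sqrt (inner_on C g g)) * g y)"
  have "inner_on C g0 g0 = 1"
    unfolding g0_def inner_on_scale_left inner_on_scale_right using gpos
    by (simp add: power2_eq_square[symmetric])
  moreover have "g0 \<in> ?W" unfolding g0_def by (rule orthogonal_complement_on_scale[OF g(1)])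
  ultimately have "?S \<noteq> {}" by blast
  moreover note continuous_on_inner_on_kernel_on
  ultimately obtain u where u: "u \<in> ?S"
    and "\<forall>f\<in>?S. inner_on C f (kernel_on a C f) \<le> inner_on C u (kernel_on a C u)"
    using continuous_attains_sup[OF compact_unit_sphere_orthogonal_complement_on[OF assms(1)]] by blast
  then have maximal: "inner_on C f (kernel_on a C f) \<le> inner_on C u (kernel_on a C u)"
    if "f \<in> ?W" "inner_on C f f = 1" for f
    using that by blast
  have u_mem: "u \<in> ?W" and u_unit: "inner_on C u u = 1" using u by auto
  interpret rayleigh_maximizer C a ?W u
    by (rule rayleigh_maximizer.intro[OF assms(1,2) orthogonal_complement_on_add orthogonal_complement_on_scale
          kernel_on_orthogonal_complement_on[OF assms(2) orth] u_mem u_unit maximal])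
  have "\<forall>y\<in>C. (\<Sum>y'\<in>C. a y y' * u y') = rayleigh u * u y" using eigenvector by blast
  then show ?thesis using u_mem u_unit by blast
qed

lemma orthonormal_eigenvectors_extend:
  assumes orth: "orthonormal_eigenvectors C a K lam v"
    and u: "u \<in> orthogonal_complement_on C K v" "inner_on C u u = 1"
      "\<forall>y\<in>C. (\<Sum>y'\<in>C. a y y' * u y') = l * u y"
  shows "orthonormal_eigenvectors C a (Suc K) (lam(K := l)) (v(K := u))"
proof -
  have uv: "inner_on C (v k) u = 0" "inner_on C u (v k) = 0" if "k < K" for k
    using u(1) that inner_on_commute[of C u "v k"] unfolding orthogonal_complement_on_def by auto
  show ?thesis
    using orth u unfolding orthonormal_eigenvectors_def orthogonal_complement_on_def
    by (auto simp: less_Suc_eq uv)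
qed

definition eigenbasis_on ::
  "'a set \<Rightarrow> ('a \<Rightarrow> 'a \<Rightarrow> real) \<Rightarrow> nat \<Rightarrow> (nat \<Rightarrow> real) \<Rightarrow> (nat \<Rightarrow> 'a \<Rightarrow> real) \<Rightarrow> bool" where
  "eigenbasis_on C a K lam v \<longleftrightarrow> orthonormal_eigenvectors C a K lam v \<and>
     (\<forall>f. supported_on C f \<longrightarrow> (\<forall>y. f y = (\<Sum>k<K. inner_on C (v k) f * v k y)))"

text \<open>A maximal orthonormal family of eigenvectors is complete, since otherwise the residual of
  some vector would be a nonzero element of its orthogonal complement, which contains a further
  eigenvector.\<close>

theorem symmetric_kernel_eigenbasis:
  assumes "finite C" "symmetric_on C a"
  shows "\<exists>K lam v. eigenbasis_on C a K lam v"
proof -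
  let ?Ks = "{K. \<exists>lam v. orthonormal_eigenvectors C a K lam v}"
  have "0 \<in> ?Ks" unfolding orthonormal_eigenvectors_def by auto
  have "?Ks \<subseteq> {..card C}" using orthonormal_eigenvectors_le_card[OF assms(1)] by auto
  then have "finite ?Ks" using finite_subset by blast
  define K where "K = Max ?Ks"
  have "K \<in> ?Ks" unfolding K_def using \<open>finite ?Ks\<close> \<open>0 \<in> ?Ks\<close> by (intro Max_in) auto
  then obtain lam v where orth: "orthonormal_eigenvectors C a K lam v" by blast
  have maximal: "K' \<le> K" if "K' \<in> ?Ks" for K' unfolding K_def using \<open>finite ?Ks\<close> that by simp
  have "f y0 = (\<Sum>k<K. inner_on C (v k) f * v k y0)" if f: "supported_on C f" for f y0
  proof (rule ccontr)
    assume ne: "f y0 \<noteq> (\<Sum>k<K. inner_on C (v k) f * v k y0)"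
    define g where "g = (\<lambda>y. f y - 1 * (\<Sum>k<K. inner_on C (v k) f * v k y))"
    have "supported_on C g"
      using f orth unfolding g_def supported_on_def orthonormal_eigenvectors_def by auto
    moreover have "inner_on C (v j) g = 0" if "j < K" for j
      unfolding g_def inner_on_diff_right inner_on_orthonormal_sum[OF orth that] by simp
    ultimately have "g \<in> orthogonal_complement_on C K v"
      unfolding orthogonal_complement_on_def by blast
    moreover have "g y0 \<noteq> 0" using ne unfolding g_def by simp
    ultimately obtain u l where "u \<in> orthogonal_complement_on C K v" "inner_on C u u = 1"
      "\<forall>y\<in>C. (\<Sum>y'\<in>C. a y y' * u y') = l * u y"
      using eigenvector_in_orthogonal_complement_on[OF assms orth] by blast
    then have "orthonormal_eigenvectors C a (Suc K) (lam(K := l)) (v(K := u))"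
      by (rule orthonormal_eigenvectors_extend[OF orth])
    then have "Suc K \<in> ?Ks" by blast
    then show False using maximal[of "Suc K"] by simp
  qed
  then show ?thesis using orth unfolding eigenbasis_on_def by blast
qed

section \<open>Resolvents of symmetric kernels\<close>

definition coeff_on :: "'a set \<Rightarrow> ('a \<Rightarrow> real) \<Rightarrow> ('a \<Rightarrow> complex) \<Rightarrow> complex" where
  "coeff_on C w h = (\<Sum>y\<in>C. complex_of_real (w y) * h y)"

definition resolvent_on ::
  "'a set \<Rightarrow> nat \<Rightarrow> (nat \<Rightarrow> real) \<Rightarrow> (nat \<Rightarrow> 'a \<Rightarrow> real) \<Rightarrow> complex \<Rightarrow> ('a \<Rightarrow> complex) \<Rightarrow> 'a \<Rightarrow> complex" where
  "resolvent_on C K lam v z h y =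
     (\<Sum>k<K. coeff_on C (v k) h / (complex_of_real (lam k) - z) * complex_of_real (v k y))"

lemma resolvent_on_add:
  "resolvent_on C K lam v z (\<lambda>y. h1 y + c * h2 y) y = resolvent_on C K lam v z h1 y + c * resolvent_on C K lam v z h2 y"
  unfolding resolvent_on_def coeff_on_def
  by (simp add: sum.distrib sum_distrib_left add_divide_distrib algebra_simps)

lemma cmod_of_real_minus_sq: "(cmod (complex_of_real l - z))\<^sup>2 = (l - Re z)\<^sup>2 + (Im z)\<^sup>2"
  by (simp add: cmod_power2)

lemma of_real_minus_nonzero: "Im z \<noteq> 0 \<Longrightarrow> complex_of_real l - z \<noteq> 0"
  by (auto simp: complex_eq_iff)

locale symmetric_eigenbasis =
  fixes C :: "'a set" and a :: "'a \<Rightarrow> 'a \<Rightarrow> real" and K :: nat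
    and lam :: "nat \<Rightarrow> real" and v :: "nat \<Rightarrow> 'a \<Rightarrow> real"
  assumes finite: "finite C" and symmetric: "symmetric_on C a"
    and basis: "eigenbasis_on C a K lam v"
begin

lemma orthonormal: "orthonormal_eigenvectors C a K lam v"
  using basis unfolding eigenbasis_on_def by blast

lemma eigenvector_outside: "k < K \<Longrightarrow> y \<notin> C \<Longrightarrow> v k y = 0"
  using orthonormal unfolding orthonormal_eigenvectors_def supported_on_def by auto

lemma eigen_equation: "k < K \<Longrightarrow> y \<in> C \<Longrightarrow> (\<Sum>y'\<in>C. a y y' * v k y') = lam k * v k y"
  using orthonormal unfolding orthonormal_eigenvectors_def by auto

lemma inner_on_eigenvectors: "i < K \<Longrightarrow> j < K \<Longrightarrow> inner_on C (v i) (v j) = (if i = j then 1 else 0)"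
  using orthonormal unfolding orthonormal_eigenvectors_def by auto

lemma card_le: "K \<le> card C"
  by (rule orthonormal_eigenvectors_le_card[OF finite orthonormal])

lemma expansion:
  assumes "supported_on C f"
  shows "f y = (\<Sum>k<K. coeff_on C (v k) f * complex_of_real (v k y))"
proof -
  have "supported_on C (\<lambda>y. Re (f y))" "supported_on C (\<lambda>y. Im (f y))"
    using assms unfolding supported_on_def by auto
  then have "Re (f y) = (\<Sum>k<K. inner_on C (v k) (\<lambda>y. Re (f y)) * v k y)"
    and "Im (f y) = (\<Sum>k<K. inner_on C (v k) (\<lambda>y. Im (f y)) * v k y)"
    using basis unfolding eigenbasis_on_def by blast+
  moreover have "Re (coeff_on C (v k) f) = inner_on C (v k) (\<lambda>y. Re (f y))"
    and "Im (coeff_on C (v k) f) = inner_on C (v k) (\<lambda>y. Im (f y))" for k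
    unfolding coeff_on_def inner_on_def by (simp_all add: Re_sum Im_sum)
  ultimately show ?thesis by (simp add: complex_eq_iff Re_sum Im_sum)
qed

lemma supported_on_resolvent: "supported_on C (resolvent_on C K lam v z h)"
  unfolding supported_on_def resolvent_on_def using eigenvector_outside by simp

lemma coeff_on_kernel:
  assumes "k < K"
  shows "(\<Sum>y\<in>C. complex_of_real (v k y) * (\<Sum>y'\<in>C. complex_of_real (a y y') * f y'))
         = complex_of_real (lam k) * coeff_on C (v k) f"
proof -
  have "(\<Sum>y\<in>C. complex_of_real (v k y) * (\<Sum>y'\<in>C. complex_of_real (a y y') * f y'))
      = (\<Sum>y'\<in>C. \<Sum>y\<in>C. complex_of_real (v k y) * complex_of_real (a y y') * f y')"
    by (subst sum.swap) (simp add: sum_distrib_left mult.assoc)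
  also have "\<dots> = (\<Sum>y'\<in>C. complex_of_real (\<Sum>y\<in>C. a y' y * v k y) * f y')"
  proof (intro sum.cong refl)
    fix y' assume y': "y' \<in> C"
    have "complex_of_real (\<Sum>y\<in>C. a y' y * v k y) * f y'
        = (\<Sum>y\<in>C. complex_of_real (a y' y * v k y) * f y')"
      by (simp add: sum_distrib_right)
    also have "\<dots> = (\<Sum>y\<in>C. complex_of_real (v k y) * complex_of_real (a y y') * f y')"
      using symmetric y' unfolding symmetric_on_def by (intro sum.cong refl) (simp add: mult.commute)
    finally show "(\<Sum>y\<in>C. complex_of_real (v k y) * complex_of_real (a y y') * f y')
        = complex_of_real (\<Sum>y\<in>C. a y' y * v k y) * f y'" by simp
  qed
  also have "\<dots> = (\<Sum>y'\<in>C. complex_of_real (lam k * v k y') * f y')"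
    by (intro sum.cong refl) (simp add: eigen_equation[OF assms])
  also have "\<dots> = complex_of_real (lam k) * coeff_on C (v k) f"
    unfolding coeff_on_def by (simp add: sum_distrib_left mult.assoc)
  finally show ?thesis .
qed

lemma resolvent_unique:
  assumes z: "Im z \<noteq> 0" and f: "supported_on C f"
    and eq: "\<forall>y\<in>C. (\<Sum>y'\<in>C. complex_of_real (a y y') * f y') - z * f y = h y"
  shows "f y = resolvent_on C K lam v z h y"
proof -
  have coeff: "coeff_on C (v k) h = (complex_of_real (lam k) - z) * coeff_on C (v k) f" if "k < K" for k
  proof -
    have "coeff_on C (v k) h
        = (\<Sum>y\<in>C. complex_of_real (v k y) * ((\<Sum>y'\<in>C. complex_of_real (a y y') * f y') - z * f y))"
      unfolding coeff_on_def using eq by (intro sum.cong refl) simp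
    also have "\<dots> = (\<Sum>y\<in>C. complex_of_real (v k y) * (\<Sum>y'\<in>C. complex_of_real (a y y') * f y'))
        - z * coeff_on C (v k) f"
      unfolding coeff_on_def by (simp add: algebra_simps sum_subtractf sum_distrib_left)
    finally have "coeff_on C (v k) h = \<dots>" .
    then show ?thesis unfolding coeff_on_kernel[OF that] by (simp add: algebra_simps)
  qed
  have "f y = (\<Sum>k<K. coeff_on C (v k) f * complex_of_real (v k y))" by (rule expansion[OF f])
  also have "\<dots> = resolvent_on C K lam v z h y"
    unfolding resolvent_on_def using coeff of_real_minus_nonzero[OF z] by (intro sum.cong refl) simp
  finally show ?thesis .
qed

lemma resolvent_solves:
  assumes z: "Im z \<noteq> 0" and h: "supported_on C h" and y: "y \<in> C"
  shows "(\<Sum>y'\<in>C. complex_of_real (a y y') * resolvent_on C K lam v z h y') - z * resolvent_on C K lam v z h y = h y"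
proof -
  define \<alpha> where "\<alpha> k = coeff_on C (v k) h / (complex_of_real (lam k) - z)" for k
  have "(\<Sum>y'\<in>C. complex_of_real (a y y') * resolvent_on C K lam v z h y')
      = (\<Sum>k<K. \<alpha> k * complex_of_real (\<Sum>y'\<in>C. a y y' * v k y'))"
    unfolding resolvent_on_def \<alpha>_def[symmetric]
    by (simp add: sum_distrib_left sum_distrib_right sum.swap[of _ C] algebra_simps)
  also have "\<dots> = (\<Sum>k<K. \<alpha> k * complex_of_real (lam k * v k y))"
    using eigen_equation y by (intro sum.cong refl) simp
  finally have A: "(\<Sum>y'\<in>C. complex_of_real (a y y') * resolvent_on C K lam v z h y')
      = (\<Sum>k<K. \<alpha> k * complex_of_real (lam k * v k y))" .
  have B: "z * resolvent_on C K lam v z h y = (\<Sum>k<K. z * (\<alpha> k * complex_of_real (v k y)))"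
    unfolding resolvent_on_def \<alpha>_def by (simp add: sum_distrib_left)
  have "(\<Sum>y'\<in>C. complex_of_real (a y y') * resolvent_on C K lam v z h y') - z * resolvent_on C K lam v z h y
      = (\<Sum>k<K. \<alpha> k * (complex_of_real (lam k) - z) * complex_of_real (v k y))"
    unfolding A B by (simp add: sum_subtractf[symmetric] algebra_simps)
  also have "\<dots> = (\<Sum>k<K. coeff_on C (v k) h * complex_of_real (v k y))"
    unfolding \<alpha>_def using of_real_minus_nonzero[OF z] by simp
  also have "\<dots> = h y" using expansion[OF h] by simp
  finally show ?thesis .
qed

lemma Parseval:
  "(\<Sum>y\<in>C. (cmod (\<Sum>k<K. \<beta> k * complex_of_real (v k y)))\<^sup>2) = (\<Sum>k<K. (cmod (\<beta> k))\<^sup>2)"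
proof -
  have "complex_of_real (\<Sum>y\<in>C. (cmod (\<Sum>k<K. \<beta> k * complex_of_real (v k y)))\<^sup>2)
      = (\<Sum>y\<in>C. (\<Sum>k<K. \<beta> k * complex_of_real (v k y)) * cnj (\<Sum>j<K. \<beta> j * complex_of_real (v j y)))"
    unfolding of_real_sum by (intro sum.cong refl) (rule complex_norm_square)
  also have "\<dots> = (\<Sum>y\<in>C. \<Sum>k<K. \<Sum>j<K. \<beta> k * cnj (\<beta> j) * complex_of_real (v k y * v j y))"
    by (intro sum.cong refl) (simp only: cnj_sum sum_product, simp add: algebra_simps)
  also have "\<dots> = (\<Sum>k<K. \<Sum>j<K. \<Sum>y\<in>C. \<beta> k * cnj (\<beta> j) * complex_of_real (v k y * v j y))"
    by (subst sum.swap) (intro sum.cong refl, rule sum.swap)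
  also have "\<dots> = (\<Sum>k<K. \<Sum>j<K. \<beta> k * cnj (\<beta> j) * complex_of_real (inner_on C (v k) (v j)))"
    unfolding inner_on_def by (simp add: sum_distrib_left)
  also have "\<dots> = (\<Sum>k<K. \<beta> k * cnj (\<beta> k))"
    by (intro sum.cong refl) (simp add: inner_on_eigenvectors if_distrib cong: if_cong)
  also have "\<dots> = complex_of_real (\<Sum>k<K. (cmod (\<beta> k))\<^sup>2)"
    unfolding of_real_sum by (intro sum.cong refl) (rule complex_norm_square[symmetric])
  finally show ?thesis using of_real_eq_iff by blast
qed

lemma sum_cmod_resolvent_sq:
  "(\<Sum>y\<in>C. (cmod (resolvent_on C K lam v z h y))\<^sup>2)
     = (\<Sum>k<K. (cmod (coeff_on C (v k) h))\<^sup>2 / (cmod (complex_of_real (lam k) - z))\<^sup>2)"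
  unfolding resolvent_on_def Parseval by (simp add: norm_divide power_divide)

lemma sum_cmod_resolvent_sq_le:
  assumes "\<forall>k<K. lam k \<noteq> Re z"
  shows "(\<Sum>y\<in>C. (cmod (resolvent_on C K lam v z h y))\<^sup>2)
           \<le> (\<Sum>k<K. (cmod (coeff_on C (v k) h))\<^sup>2 / (lam k - Re z)\<^sup>2)"
  unfolding sum_cmod_resolvent_sq
proof (rule sum_mono)
  fix k assume "k \<in> {..<K}"
  then have pos: "(lam k - Re z)\<^sup>2 > 0" using assms by simp
  moreover have le: "(lam k - Re z)\<^sup>2 \<le> (cmod (complex_of_real (lam k) - z))\<^sup>2"
    unfolding cmod_of_real_minus_sq by simp
  ultimately have cpos: "(cmod (complex_of_real (lam k) - z))\<^sup>2 > 0" by linarith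
  show "(cmod (coeff_on C (v k) h))\<^sup>2 / (cmod (complex_of_real (lam k) - z))\<^sup>2
      \<le> (cmod (coeff_on C (v k) h))\<^sup>2 / (lam k - Re z)\<^sup>2"
    by (rule divide_left_mono[OF le]) (use pos cpos in auto)
qed

lemma coeff_on_delta: "x \<in> C \<Longrightarrow> coeff_on C (v k) (\<lambda>y. if y = x then 1 else 0) = complex_of_real (v k x)"
  unfolding coeff_on_def using finite by (simp add: if_distrib cong: if_cong)

lemma coeff_on_one: "coeff_on C (v k) (\<lambda>y. 1) = complex_of_real (\<Sum>y\<in>C. v k y)"
  unfolding coeff_on_def by simp

lemma sum_eigenvector_sums_sq_le_card: "(\<Sum>k<K. (\<Sum>y\<in>C. v k y)\<^sup>2) \<le> real (card C)"
  using Bessel_inequality[OF orthonormal, of "\<lambda>_. 1"] unfolding inner_on_def by simp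

lemma Im_resolvent_delta:
  assumes x: "x \<in> C"
  defines "\<delta> \<equiv> \<lambda>y. if y = x then 1 else 0"
  shows "Im (resolvent_on C K lam v z \<delta> x) = Im z * (\<Sum>y\<in>C. (cmod (resolvent_on C K lam v z \<delta> y))\<^sup>2)"
proof -
  have "Im (complex_of_real r / (complex_of_real l - z) * complex_of_real r)
      = Im z * (r\<^sup>2 / (cmod (complex_of_real l - z))\<^sup>2)" for r l
    unfolding cmod_of_real_minus_sq by (simp add: Im_divide power2_eq_square algebra_simps)
  then have "Im (resolvent_on C K lam v z \<delta> x)
      = (\<Sum>k<K. Im z * ((v k x)\<^sup>2 / (cmod (complex_of_real (lam k) - z))\<^sup>2))"
    unfolding resolvent_on_def \<delta>_def coeff_on_delta[OF x] Im_sum by (intro sum.cong refl)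
  also have "\<dots> = Im z * (\<Sum>y\<in>C. (cmod (resolvent_on C K lam v z \<delta> y))\<^sup>2)"
    unfolding sum_cmod_resolvent_sq \<delta>_def coeff_on_delta[OF x] by (simp add: sum_distrib_left)
  finally show ?thesis .
qed

end

section \<open>Lebesgue measure of the exceptional energies\<close>

lemma nn_integral_inverse_square_atLeast:
  fixes \<rho> :: real assumes "\<rho> > 0"
  shows "(\<integral>\<^sup>+ x. ennreal (indicator {\<rho>..} x * (1 / x\<^sup>2)) \<partial>lborel) = ennreal (1 / \<rho>)"
proof -
  have "((\<lambda>x. 1 / x ^ 2) has_integral 1 / (real (2 - 1) * \<rho> ^ (2 - 1))) {\<rho>..}"
    by (rule has_integral_inverse_power_to_inf) (use assms in auto)
  then have "((\<lambda>x::real. 1 / x\<^sup>2) has_integral 1 / \<rho>) {\<rho>..}" by simp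
  then show ?thesis
    using nn_integral_has_integral_lebesgue[of "{\<rho>..}" "\<lambda>x. 1 / x\<^sup>2" "1 / \<rho>"] by simp
qed

lemma nn_integral_inverse_square_far_le:
  fixes \<rho> l :: real assumes \<rho>: "\<rho> > 0"
  shows "(\<integral>\<^sup>+ e. ennreal (indicator {e. \<rho> < \<bar>e - l\<bar>} e * (1 / (l - e)\<^sup>2)) \<partial>lborel) \<le> ennreal (2 / \<rho>)"
proof -
  define h where "h x = ennreal (indicator {\<rho>..} x * (1 / x\<^sup>2))" for x :: real
  have h_meas[measurable]: "h \<in> borel_measurable borel" unfolding h_def by measurable
  define f where "f e = ennreal (indicator {e. \<rho> < \<bar>e - l\<bar>} e * (1 / (l - e)\<^sup>2))" for e
  have f_meas[measurable]: "f \<in> borel_measurable borel" unfolding f_def by measurable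
  have "(\<integral>\<^sup>+ e. f e \<partial>lborel) = (\<integral>\<^sup>+ x. f (l + 1 * x) \<partial>lborel)"
    using nn_integral_real_affine[OF f_meas, of 1 l] by simp
  also have "\<dots> = (\<integral>\<^sup>+ x. ennreal (indicator {x. \<rho> < \<bar>x\<bar>} x * (1 / x\<^sup>2)) \<partial>lborel)"
    unfolding f_def by (simp add: indicator_def)
  also have "\<dots> \<le> (\<integral>\<^sup>+ x. h x + h (0 + (-1) * x) \<partial>lborel)"
    unfolding h_def by (intro nn_integral_mono) (auto simp: indicator_def)
  also have "\<dots> = (\<integral>\<^sup>+ x. h x \<partial>lborel) + (\<integral>\<^sup>+ x. h (0 + (-1) * x) \<partial>lborel)"
    by (rule nn_integral_add) measurable
  also have "(\<integral>\<^sup>+ x. h (0 + (-1) * x) \<partial>lborel) = (\<integral>\<^sup>+ x. h x \<partial>lborel)"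
    using nn_integral_real_affine[OF h_meas, of "-1" 0] by simp
  also have "(\<integral>\<^sup>+ x. h x \<partial>lborel) = ennreal (1 / \<rho>)"
    unfolding h_def by (rule nn_integral_inverse_square_atLeast[OF \<rho>])
  also have "ennreal (1 / \<rho>) + ennreal (1 / \<rho>) = ennreal (2 / \<rho>)"
    using \<rho> by (simp flip: ennreal_plus)
  finally show ?thesis unfolding f_def .
qed

lemma emeasure_Union_Icc_le:
  fixes \<rho> :: real assumes "\<rho> > 0"
  shows "emeasure lborel (\<Union>k<K. {lam k - \<rho> .. lam k + \<rho>}) \<le> ennreal (2 * real K * \<rho>)"
proof -
  have "emeasure lborel (\<Union>k<K. {lam k - \<rho> .. lam k + \<rho>}) \<le> (\<Sum>k<K. emeasure lborel {lam k - \<rho> .. lam k + \<rho>})"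
    by (rule emeasure_subadditive_finite) auto
  also have "\<dots> = (\<Sum>k<K. ennreal (2 * \<rho>))"
    using assms by (intro sum.cong refl) (simp add: emeasure_lborel_Icc_eq)
  also have "\<dots> = ennreal (\<Sum>k<K. 2 * \<rho>)" using assms by (subst sum_ennreal) auto
  also have "\<dots> = ennreal (2 * real K * \<rho>)" by (simp add: algebra_simps)
  finally show ?thesis .
qed

text \<open>Away from the \<open>\<rho>\<close>-neighbourhood of the poles, Markov's inequality bounds the set where the
  sum of inverse squares is large by its integral, which is \<open>O(1/\<rho>)\<close> per pole.\<close>

lemma nn_integral_far_from_poles_le:
  fixes lam c :: "nat \<Rightarrow> real" and K :: nat and \<rho> :: real
  assumes \<rho>: "\<rho> > 0" and c: "\<And>k. c k \<ge> 0"
  defines "B \<equiv> \<Union>k<K. {lam k - \<rho> .. lam k + \<rho>}"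
  shows "(\<integral>\<^sup>+ e. ennreal (\<Sum>k<K. c k / (lam k - e)\<^sup>2) * indicator (-B) e \<partial>lborel)
           \<le> ennreal ((\<Sum>k<K. c k) * (2 / \<rho>))"
proof -
  define f where "f k e = ennreal (indicator {e. \<rho> < \<bar>e - lam k\<bar>} e * (1 / (lam k - e)\<^sup>2))" for k e
  have [measurable]: "f k \<in> borel_measurable borel" for k unfolding f_def by measurable
  have "(\<integral>\<^sup>+ e. ennreal (\<Sum>k<K. c k / (lam k - e)\<^sup>2) * indicator (-B) e \<partial>lborel)
      \<le> (\<integral>\<^sup>+ e. (\<Sum>k<K. ennreal (c k) * f k e) \<partial>lborel)"
  proof (rule nn_integral_mono)
    fix e
    show "ennreal (\<Sum>k<K. c k / (lam k - e)\<^sup>2) * indicator (-B) e \<le> (\<Sum>k<K. ennreal (c k) * f k e)"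
    proof (cases "e \<in> B")
      case False
      have "\<rho> < \<bar>e - lam k\<bar>" if "k < K" for k
      proof -
        have "\<not> (lam k - \<rho> \<le> e \<and> e \<le> lam k + \<rho>)" using False that unfolding B_def by auto
        then show ?thesis by (auto simp: abs_if not_le)
      qed
      then have "ennreal (\<Sum>k<K. c k / (lam k - e)\<^sup>2) = (\<Sum>k<K. ennreal (c k) * f k e)"
        unfolding f_def using c
        by (subst sum_ennreal[symmetric]) (auto simp: ennreal_mult[symmetric] divide_inverse intro!: sum.cong)
      then show ?thesis using False by simp
    qed simp
  qed
  also have "\<dots> = (\<Sum>k<K. ennreal (c k) * (\<integral>\<^sup>+ e. f k e \<partial>lborel))"
    by (subst nn_integral_sum) (auto simp: nn_integral_cmult)
  also have "\<dots> \<le> (\<Sum>k<K. ennreal (c k) * ennreal (2 / \<rho>))"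
    unfolding f_def by (intro sum_mono mult_left_mono nn_integral_inverse_square_far_le[OF \<rho>]) auto
  also have "\<dots> = ennreal ((\<Sum>k<K. c k) * (2 / \<rho>))"
    using c \<rho> by (simp add: ennreal_mult[symmetric] sum_distrib_right sum_divide_distrib)
  finally show ?thesis .
qed

lemma emeasure_far_from_poles_large_le:
  fixes lam c :: "nat \<Rightarrow> real" and K :: nat and \<rho> t :: real
  assumes \<rho>: "\<rho> > 0" and t: "t > 0" and c: "\<And>k. c k \<ge> 0"
  defines "B \<equiv> \<Union>k<K. {lam k - \<rho> .. lam k + \<rho>}"
  shows "emeasure lborel {e \<in> -B. t\<^sup>2 < (\<Sum>k<K. c k / (lam k - e)\<^sup>2)} \<le> ennreal (2 * (\<Sum>k<K. c k) / (\<rho> * t\<^sup>2))"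
proof -
  define G where "G e = (\<Sum>k<K. c k / (lam k - e)\<^sup>2)" for e
  have [measurable]: "B \<in> sets borel" "G \<in> borel_measurable borel"
    unfolding B_def G_def by measurable
  have G_nonneg: "G e \<ge> 0" for e unfolding G_def using c by (intro sum_nonneg) auto
  have "{e \<in> -B. t\<^sup>2 < G e} \<subseteq> {e \<in> -B. 1 \<le> ennreal (1 / t\<^sup>2) * ennreal (G e)}"
    using t G_nonneg by (auto simp: ennreal_mult[symmetric] field_simps intro!: ennreal_leI)
  then have "emeasure lborel {e \<in> -B. t\<^sup>2 < G e} \<le> emeasure lborel {e \<in> -B. 1 \<le> ennreal (1 / t\<^sup>2) * ennreal (G e)}"
    by (rule emeasure_mono) measurable
  also have "\<dots> \<le> ennreal (1 / t\<^sup>2) * (\<integral>\<^sup>+ e. ennreal (G e) * indicator (-B) e \<partial>lborel)"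
    by (rule nn_integral_Markov_inequality) auto
  also have "\<dots> \<le> ennreal (1 / t\<^sup>2) * ennreal ((\<Sum>k<K. c k) * (2 / \<rho>))"
    unfolding G_def B_def by (intro mult_left_mono nn_integral_far_from_poles_le[OF \<rho> c]) auto
  also have "\<dots> = ennreal (2 * (\<Sum>k<K. c k) / (\<rho> * t\<^sup>2))"
    using c \<rho> t by (simp add: ennreal_mult[symmetric] sum_nonneg field_simps)
  finally show ?thesis unfolding G_def .
qed

lemma emeasure_near_poles_or_large_le:
  fixes lam c :: "nat \<Rightarrow> real" and \<rho> t :: real
  assumes \<rho>: "\<rho> > 0" and t: "t > 0" and c: "\<And>k. c k \<ge> 0"
  shows "emeasure lborel ((\<Union>k<K. {lam k - \<rho> .. lam k + \<rho>}) \<union> {e. t\<^sup>2 < (\<Sum>k<K. c k / (lam k - e)\<^sup>2)})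
           \<le> ennreal (2 * real K * \<rho> + 2 * (\<Sum>k<K. c k) / (\<rho> * t\<^sup>2))"
proof -
  define B where "B = (\<Union>k<K. {lam k - \<rho> .. lam k + \<rho>})"
  define X where "X = {e \<in> -B. t\<^sup>2 < (\<Sum>k<K. c k / (lam k - e)\<^sup>2)}"
  have "B \<union> {e. t\<^sup>2 < (\<Sum>k<K. c k / (lam k - e)\<^sup>2)} = B \<union> X" unfolding X_def by blast
  then have "emeasure lborel (B \<union> {e. t\<^sup>2 < (\<Sum>k<K. c k / (lam k - e)\<^sup>2)}) \<le> emeasure lborel B + emeasure lborel X"
    by (simp add: B_def X_def emeasure_subadditive)
  also have "\<dots> \<le> ennreal (2 * real K * \<rho>) + ennreal (2 * (\<Sum>k<K. c k) / (\<rho> * t\<^sup>2))"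
    unfolding B_def X_def
    by (intro add_mono emeasure_Union_Icc_le emeasure_far_from_poles_large_le) (use assms in auto)
  also have "\<dots> = ennreal (2 * real K * \<rho> + 2 * (\<Sum>k<K. c k) / (\<rho> * t\<^sup>2))"
    using c \<rho> t by (simp add: sum_nonneg)
  finally show ?thesis unfolding B_def .
qed

section \<open>From the Stieltjes transform to the integral of \<open>1/(e - l)\<^sup>2\<close>\<close>

lemma Im_inverse_of_real_minus_Complex:
  "Im (1 / (complex_of_real l - Complex e \<epsilon>)) = \<epsilon> / ((l - e)\<^sup>2 + \<epsilon>\<^sup>2)"
  by (simp add: Im_divide power2_eq_square)

lemma measurable_sets_eq_borel:
  "sets \<mu> = sets borel \<Longrightarrow> f \<in> borel_measurable borel \<Longrightarrow> f \<in> borel_measurable \<mu>"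
  by (subst measurable_cong_sets[of \<mu> borel borel borel]) simp_all

lemma nn_integral_Lorentzian_le:
  fixes \<mu> :: "real measure" and e \<epsilon> M :: real
  assumes "finite_measure \<mu>" "sets \<mu> = sets borel" and \<epsilon>: "\<epsilon> > 0"
    and Im_le: "Im (\<integral>l. 1 / (complex_of_real l - Complex e \<epsilon>) \<partial>\<mu>) \<le> \<epsilon> * M"
  shows "(\<integral>\<^sup>+ l. ennreal (1 / ((l - e)\<^sup>2 + \<epsilon>\<^sup>2)) \<partial>\<mu>) \<le> ennreal M"
proof -
  interpret finite_measure \<mu> by fact
  let ?f = "\<lambda>l. 1 / ((l - e)\<^sup>2 + \<epsilon>\<^sup>2)"
  let ?g = "\<lambda>l. 1 / (complex_of_real l - Complex e \<epsilon>)"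
  have "integrable \<mu> ?f"
  proof (rule integrable_const_bound[where B = "1 / \<epsilon>\<^sup>2"])
    show "AE l in \<mu>. norm (?f l) \<le> 1 / \<epsilon>\<^sup>2"
      using \<epsilon> by (intro AE_I2) (simp add: frac_le)
  qed (rule measurable_sets_eq_borel[OF assms(2)], measurable)
  have "integrable \<mu> ?g"
  proof (rule integrable_const_bound[where B = "1 / \<epsilon>"])
    have "\<epsilon> \<le> cmod (complex_of_real l - Complex e \<epsilon>)" for l
      using abs_Im_le_cmod[of "complex_of_real l - Complex e \<epsilon>"] \<epsilon> by simp
    then show "AE l in \<mu>. norm (?g l) \<le> 1 / \<epsilon>"
      using \<epsilon> by (intro AE_I2) (simp add: norm_divide frac_le)
  qed (rule measurable_sets_eq_borel[OF assms(2)], measurable)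
  then have "Im (\<integral>l. ?g l \<partial>\<mu>) = (\<integral>l. Im (?g l) \<partial>\<mu>)" by simp
  also have "\<dots> = (\<integral>l. \<epsilon> * ?f l \<partial>\<mu>)" by (simp add: Im_inverse_of_real_minus_Complex)
  also have "\<dots> = \<epsilon> * (\<integral>l. ?f l \<partial>\<mu>)" by (rule integral_mult_right_zero)
  finally have "Im (\<integral>l. ?g l \<partial>\<mu>) = \<epsilon> * (\<integral>l. ?f l \<partial>\<mu>)" .
  then have "(\<integral>l. ?f l \<partial>\<mu>) \<le> M" using Im_le \<epsilon> by simp
  moreover have "(\<integral>\<^sup>+ l. ennreal (?f l) \<partial>\<mu>) = ennreal (\<integral>l. ?f l \<partial>\<mu>)"
    by (rule nn_integral_eq_integral[OF \<open>integrable \<mu> ?f\<close>]) (simp add: add_nonneg_nonneg)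
  ultimately show ?thesis by (simp add: ennreal_leI)
qed

lemma SUP_Lorentzian:
  fixes e l :: real
  shows "(SUP k. ennreal (1 / ((l - e)\<^sup>2 + (1 / Suc k)\<^sup>2))) = (if l = e then \<infinity> else ennreal (1 / (e - l)\<^sup>2))"
proof (cases "l = e")
  case True
  have "(SUP k. of_nat k) \<le> (SUP k. ennreal (1 / ((l - e)\<^sup>2 + (1 / Suc k)\<^sup>2)))"
  proof (rule SUP_mono)
    fix k :: nat
    have "real k \<le> real (Suc k) * real (Suc k)" by (simp add: algebra_simps)
    then show "\<exists>k'\<in>UNIV. of_nat k \<le> ennreal (1 / ((l - e)\<^sup>2 + (1 / Suc k')\<^sup>2))"
      using True by (intro bexI[of _ k]) (auto simp: ennreal_of_nat_eq_real_of_nat power2_eq_square intro: ennreal_leI)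
  qed
  then show ?thesis using True by (simp add: ennreal_SUP_of_nat_eq_top top_unique)
next
  case False
  have "(\<lambda>k. 1 / ((l - e)\<^sup>2 + (1 / real (Suc k))\<^sup>2)) \<longlonglongrightarrow> 1 / ((l - e)\<^sup>2 + 0\<^sup>2)"
    using False LIMSEQ_inverse_real_of_nat by (intro tendsto_intros) (auto simp: inverse_eq_divide)
  then have lim: "(\<lambda>k. ennreal (1 / ((l - e)\<^sup>2 + (1 / Suc k)\<^sup>2))) \<longlonglongrightarrow> ennreal (1 / (e - l)\<^sup>2)"
    by (intro tendsto_ennrealI) (simp add: power2_commute)
  have "incseq (\<lambda>k. ennreal (1 / ((l - e)\<^sup>2 + (1 / Suc k)\<^sup>2)))"
    by (intro incseq_SucI ennreal_leI divide_left_mono add_left_mono power_mono)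
      (auto simp: frac_le add_nonneg_pos)
  then have "(\<lambda>k. ennreal (1 / ((l - e)\<^sup>2 + (1 / Suc k)\<^sup>2))) \<longlonglongrightarrow> (SUP k. ennreal (1 / ((l - e)\<^sup>2 + (1 / Suc k)\<^sup>2)))"
    by (rule LIMSEQ_SUP)
  then show ?thesis using LIMSEQ_unique[OF _ lim] False by simp
qed

theorem nn_integral_inverse_square_finite:
  fixes \<mu> :: "real measure" and e M :: real
  assumes "finite_measure \<mu>" "sets \<mu> = sets borel"
    and "\<And>k::nat. Im (\<integral>l. 1 / (complex_of_real l - Complex e (1 / Suc k)) \<partial>\<mu>) \<le> (1 / Suc k) * M"
  shows "(\<integral>\<^sup>+ l. (if l = e then \<infinity> else ennreal (1 / (e - l)\<^sup>2)) \<partial>\<mu>) < \<infinity>"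
proof -
  let ?f = "\<lambda>k l. ennreal (1 / ((l - e)\<^sup>2 + (1 / Suc k)\<^sup>2))"
  have "incseq ?f"
    by (intro incseq_SucI le_funI ennreal_leI divide_left_mono add_left_mono power_mono)
      (auto simp: frac_le add_nonneg_pos)
  moreover have "?f k \<in> borel_measurable \<mu>" for k
    by (rule measurable_sets_eq_borel[OF assms(2)]) measurable
  ultimately have "(\<integral>\<^sup>+ l. (SUP k. ?f k l) \<partial>\<mu>) = (SUP k. \<integral>\<^sup>+ l. ?f k l \<partial>\<mu>)"
    by (rule nn_integral_monotone_convergence_SUP)
  then have "(\<integral>\<^sup>+ l. (if l = e then \<infinity> else ennreal (1 / (e - l)\<^sup>2)) \<partial>\<mu>) = (SUP k. \<integral>\<^sup>+ l. ?f k l \<partial>\<mu>)"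
    unfolding SUP_Lorentzian .
  also have "\<dots> \<le> ennreal M"
    using nn_integral_Lorentzian_le[OF assms(1,2)] assms(3) by (intro SUP_least) simp
  finally show ?thesis by (simp add: le_less_trans)
qed

section \<open>The Hamiltonian restricted to a cluster\<close>

definition block_kernel ::
  "(nat \<Rightarrow> 'x set set) \<Rightarrow> (nat \<Rightarrow> nat) \<Rightarrow> (nat \<Rightarrow> real) \<Rightarrow> ('x \<Rightarrow> real) \<Rightarrow> nat \<Rightarrow> 'x \<Rightarrow> 'x \<Rightarrow> real" where
  "block_kernel P n p \<omega> R y y' =
     (\<Sum>r\<le>R. p r * (if y' \<in> cluster P r y then 1 / real (NN n r) else 0)) + (if y' = y then \<omega> y else 0)"

locale hierarchical_hamiltonian = hierarchy P n for P :: "nat \<Rightarrow> 'x set set" and n +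
  fixes p :: "nat \<Rightarrow> real" and \<omega> :: "'x \<Rightarrow> real"
  assumes weights: "weights_ok p"
begin

abbreviation A where "A \<equiv> block_kernel P n p \<omega>"

lemma p_nonneg: "p r \<ge> 0"
  using weights unfolding weights_ok_def by (cases "r = 0") (auto intro: less_imp_le)

lemma summable_p: "summable p"
  using weights unfolding weights_ok_def sums_def summable_def by blast

lemma symmetric_on_block_kernel: "symmetric_on C (A R)"
  unfolding symmetric_on_def block_kernel_def using mem_cluster_commute by (auto intro!: sum.cong)

lemma block_kernel_Suc:
  assumes "y \<in> Q (Suc R) x" "y' \<in> Q (Suc R) x"
  shows "A (Suc R) y y' = A R y y' + p (Suc R) / real (NN n (Suc R))"
proof -
  have "y' \<in> Q (Suc R) y" using assms cluster_eq_if_mem by metis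
  then show ?thesis unfolding block_kernel_def by simp
qed

lemma block_kernel_eq_0:
  assumes y: "y \<notin> Q R x" and y': "y' \<in> Q R x"
  shows "A R y y' = 0"
proof -
  have "y' \<notin> Q r y" if "r \<le> R" for r
  proof
    assume "y' \<in> Q r y"
    then have "Q R y = Q R x" using cluster_mono[OF that] cluster_eq_if_mem y' by blast
    then show False using y mem_cluster by metis
  qed
  moreover have "y' \<noteq> y" using y y' by blast
  ultimately show ?thesis unfolding block_kernel_def by simp
qed

lemma Eop_as_kernel:
  assumes y: "y \<in> Q R x" and r: "r \<le> R"
  shows "Eop P n r f y = (\<Sum>y'\<in>Q R x. complex_of_real (if y' \<in> Q r y then 1 / real (NN n r) else 0) * f y')"
proof -
  have sub: "Q r y \<subseteq> Q R x" using cluster_mono[OF r, of y] cluster_eq_if_mem[OF y] by simp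
  have "(\<Sum>y'\<in>Q R x. complex_of_real (if y' \<in> Q r y then 1 / real (NN n r) else 0) * f y')
      = (\<Sum>y'\<in>Q R x. if y' \<in> Q r y then complex_of_real (1 / real (NN n r)) * f y' else 0)"
    by (intro sum.cong refl) simp
  also have "\<dots> = (\<Sum>y'\<in>Q R x \<inter> Q r y. complex_of_real (1 / real (NN n r)) * f y')"
    by (rule sum.inter_restrict[symmetric]) (rule finite_cluster)
  also have "Q R x \<inter> Q r y = Q r y" using sub by blast
  also have "(\<Sum>y'\<in>Q r y. complex_of_real (1 / real (NN n r)) * f y') = Eop P n r f y"
    unfolding Eop_eq_cluster_sum sum_divide_distrib using NN_pos[of r]
    by (intro sum.cong refl) (simp add: field_simps)
  finally show ?thesis by simp
qed

lemma truncated_hamiltonian_as_kernel: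
  assumes y: "y \<in> Q R x"
  shows "(\<Sum>r\<le>R. complex_of_real (p r) * Eop P n r f y) + complex_of_real (\<omega> y) * f y
       = (\<Sum>y'\<in>Q R x. complex_of_real (A R y y') * f y')"
proof -
  have "(\<Sum>r\<le>R. complex_of_real (p r) * Eop P n r f y)
      = (\<Sum>y'\<in>Q R x. \<Sum>r\<le>R. complex_of_real (p r * (if y' \<in> Q r y then 1 / real (NN n r) else 0)) * f y')"
    by (simp add: Eop_as_kernel[OF y] sum_distrib_left mult.assoc sum.swap[of _ "{..R}"])
  moreover have "(\<Sum>y'\<in>Q R x. complex_of_real (if y' = y then \<omega> y else 0) * f y')
      = (\<Sum>y'\<in>Q R x. if y' = y then complex_of_real (\<omega> y) * f y else 0)"
    by (intro sum.cong refl) auto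
  then have "complex_of_real (\<omega> y) * f y = (\<Sum>y'\<in>Q R x. complex_of_real (if y' = y then \<omega> y else 0) * f y')"
    using y finite_cluster by simp
  ultimately show ?thesis
    unfolding block_kernel_def by (simp add: sum.distrib distrib_right sum_distrib_right)
qed

lemma Eop_eq_if_le:
  assumes "y \<in> Q R x" "R \<le> r"
  shows "Eop P n r f y = Eop P n r f x"
  using assms cluster_mono[of R r x] cluster_eq_if_mem[of y r x] unfolding Eop_eq_cluster_sum by auto

lemma norm_Eop_le:
  assumes "\<forall>y. cmod (f y) \<le> B"
  shows "cmod (Eop P n r f y) \<le> B"
proof -
  have "cmod (\<Sum>y'\<in>Q r y. f y') \<le> (\<Sum>y'\<in>Q r y. B)"
    using assms by (intro order_trans[OF norm_sum sum_mono]) auto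
  also have "\<dots> = real (NN n r) * B" using card_cluster by simp
  finally show ?thesis using NN_pos[of r] unfolding Eop_eq_cluster_sum by (simp add: norm_divide field_simps)
qed

text \<open>The averages of rank above \<open>R\<close> do not distinguish the points of a rank-\<open>R\<close> cluster.\<close>

lemma Hop_eq_block_kernel_plus_const:
  assumes bounded: "\<forall>y. cmod (\<phi> y) \<le> B" and y: "y \<in> Q R x"
  shows "Hop P n p \<omega> \<phi> y = (\<Sum>y'\<in>Q R x. complex_of_real (A R y y') * \<phi> y')
            + (\<Sum>i. complex_of_real (p (i + Suc R)) * Eop P n (i + Suc R) \<phi> x)"
proof -
  define g where "g r = complex_of_real (p r) * Eop P n r \<phi> y" for r
  have "summable g"
  proof (rule summable_comparison_test)
    show "\<exists>N. \<forall>r\<ge>N. norm (g r) \<le> p r * B"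
      unfolding g_def using norm_Eop_le[OF bounded] p_nonneg by (auto simp: norm_mult intro!: mult_left_mono)
    show "summable (\<lambda>r. p r * B)" using summable_p by (rule summable_mult2)
  qed
  then have "Lap P n p \<phi> y = (\<Sum>i. g (i + Suc R)) + (\<Sum>i<Suc R. g i)"
    unfolding Lap_def g_def[symmetric] by (rule suminf_split_initial_segment)
  also have "(\<Sum>i<Suc R. g i) = (\<Sum>r\<le>R. g r)" using lessThan_Suc_atMost by simp
  also have "(\<Sum>i. g (i + Suc R)) = (\<Sum>i. complex_of_real (p (i + Suc R)) * Eop P n (i + Suc R) \<phi> x)"
    unfolding g_def using Eop_eq_if_le[OF y] by simp
  finally show ?thesis
    unfolding Hop_def g_def truncated_hamiltonian_as_kernel[OF y, symmetric] by simp
qed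

lemma tail_weights_nonneg: "(\<Sum>i. p (i + Suc R)) \<ge> 0"
  by (rule suminf_nonneg[OF summable_ignore_initial_segment[OF summable_p]]) (use p_nonneg in auto)

lemma norm_tail_Eop_le:
  assumes "\<forall>y. cmod (\<phi> y) \<le> B"
  shows "cmod (\<Sum>i. complex_of_real (p (i + Suc R)) * Eop P n (i + Suc R) \<phi> x) \<le> B * (\<Sum>i. p (i + Suc R))"
proof -
  have "summable (\<lambda>i. p (i + Suc R) * B)"
    by (rule summable_mult2) (rule summable_ignore_initial_segment[OF summable_p])
  then have "cmod (\<Sum>i. complex_of_real (p (i + Suc R)) * Eop P n (i + Suc R) \<phi> x) \<le> (\<Sum>i. p (i + Suc R) * B)"
  proof (rule norm_suminf_le[rotated])
    show "cmod (complex_of_real (p (i + Suc R)) * Eop P n (i + Suc R) \<phi> x) \<le> p (i + Suc R) * B" for i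
      unfolding norm_mult norm_of_real using norm_Eop_le[OF assms] p_nonneg by (simp add: mult_left_mono)
  qed
  also have "\<dots> = B * (\<Sum>i. p (i + Suc R))"
    using suminf_mult2[OF summable_ignore_initial_segment[OF summable_p, of "Suc R"], of B]
    by (simp add: mult.commute)
  finally show ?thesis .
qed

end

section \<open>Resolvent estimates on growing clusters\<close>

context hierarchical_hamiltonian
begin

lemma ex_cluster_eigenbases: "\<exists>K lam v. \<forall>R. eigenbasis_on (Q R x) (A R) (K R) (lam R) (v R)"
proof -
  have "\<forall>R. \<exists>t. eigenbasis_on (Q R x) (A R) (fst t) (fst (snd t)) (snd (snd t))"
    using symmetric_kernel_eigenbasis[OF finite_cluster symmetric_on_block_kernel] by fastforce
  then obtain t where "\<forall>R. eigenbasis_on (Q R x) (A R) (fst (t R)) (fst (snd (t R))) (snd (snd (t R)))"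
    by metis
  then show ?thesis
    by (intro exI[of _ "\<lambda>R. fst (t R)"] exI[of _ "\<lambda>R. fst (snd (t R))"] exI[of _ "\<lambda>R. snd (snd (t R))"])
qed

end

locale cluster_eigenbases = hierarchical_hamiltonian P n p \<omega> for P :: "nat \<Rightarrow> 'x set set" and n p \<omega> +
  fixes x :: 'x and K :: "nat \<Rightarrow> nat" and lam :: "nat \<Rightarrow> nat \<Rightarrow> real" and v :: "nat \<Rightarrow> nat \<Rightarrow> 'x \<Rightarrow> real"
  assumes eigenbases: "eigenbasis_on (Q R x) (A R) (K R) (lam R) (v R)"
begin

lemma symmetric_eigenbasis: "symmetric_eigenbasis (Q R x) (A R) (K R) (lam R) (v R)"
  by (rule symmetric_eigenbasis.intro[OF finite_cluster symmetric_on_block_kernel eigenbases])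

abbreviation res where "res R \<equiv> resolvent_on (Q R x) (K R) (lam R) (v R)"

abbreviation \<delta> :: "'x \<Rightarrow> complex" where "\<delta> \<equiv> \<lambda>y. if y = x then 1 else 0"

definition res_norm :: "nat \<Rightarrow> complex \<Rightarrow> real" where
  "res_norm R z = L2_set (\<lambda>y. cmod (res R z \<delta> y)) (Q R x)"

text \<open>By Parseval, the sum in the second set is \<open>\<parallel>(A\<^sub>R - e)\<inverse> 1\<parallel>\<^sup>2\<close>.\<close>

definition exceptional :: "nat \<Rightarrow> real \<Rightarrow> real set" where
  "exceptional R t = (\<Union>k<K R. {lam R k - 1 / t .. lam R k + 1 / t})
     \<union> {e. t\<^sup>2 < (\<Sum>k<K R. (\<Sum>y\<in>Q R x. v R k y)\<^sup>2 / (lam R k - e)\<^sup>2)}"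

lemma exceptional_sets: "exceptional R t \<in> sets lborel"
  unfolding exceptional_def by measurable

lemma emeasure_exceptional_le:
  assumes "t > 0"
  shows "emeasure lborel (exceptional R t) \<le> ennreal (4 * real (NN n R) / t)"
proof -
  interpret symmetric_eigenbasis "Q R x" "A R" "K R" "lam R" "v R" by (rule symmetric_eigenbasis)
  have N: "real (card (Q R x)) = real (NN n R)" using card_cluster by simp
  have "emeasure lborel (exceptional R t)
      \<le> ennreal (2 * real (K R) * (1 / t) + 2 * (\<Sum>k<K R. (\<Sum>y\<in>Q R x. v R k y)\<^sup>2) / ((1 / t) * t\<^sup>2))"
    unfolding exceptional_def by (rule emeasure_near_poles_or_large_le) (use assms in auto)
  also have "\<dots> \<le> ennreal (4 * real (NN n R) / t)"
  proof (rule ennreal_leI)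
    have "2 * real (K R) * (1 / t) \<le> 2 * real (NN n R) / t"
      using card_le N assms by (simp add: divide_right_mono)
    moreover have "2 * (\<Sum>k<K R. (\<Sum>y\<in>Q R x. v R k y)\<^sup>2) / ((1 / t) * t\<^sup>2) \<le> 2 * real (NN n R) / t"
      using sum_eigenvector_sums_sq_le_card N assms by (simp add: power2_eq_square divide_right_mono)
    ultimately show "2 * real (K R) * (1 / t) + 2 * (\<Sum>k<K R. (\<Sum>y\<in>Q R x. v R k y)\<^sup>2) / ((1 / t) * t\<^sup>2)
        \<le> 4 * real (NN n R) / t" by simp
  qed
  finally show ?thesis .
qed

lemma eigenvalue_ne_if_not_exceptional:
  assumes "e \<notin> exceptional R t" "t > 0" "k < K R"
  shows "lam R k \<noteq> e"
  using assms unfolding exceptional_def by force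

lemma norm_resolvent_ones_le:
  assumes e: "e \<notin> exceptional R t" and t: "t > 0" and z: "Re z = e"
  shows "L2_set (\<lambda>y. cmod (res R z (\<lambda>_. 1) y)) (Q R x) \<le> t"
proof -
  interpret symmetric_eigenbasis "Q R x" "A R" "K R" "lam R" "v R" by (rule symmetric_eigenbasis)
  have "(\<Sum>y\<in>Q R x. (cmod (res R z (\<lambda>_. 1) y))\<^sup>2)
      \<le> (\<Sum>k<K R. (cmod (coeff_on (Q R x) (v R k) (\<lambda>_. 1)))\<^sup>2 / (lam R k - Re z)\<^sup>2)"
    by (rule sum_cmod_resolvent_sq_le) (use eigenvalue_ne_if_not_exceptional[OF e t] z in auto)
  also have "\<dots> = (\<Sum>k<K R. (\<Sum>y\<in>Q R x. v R k y)\<^sup>2 / (lam R k - e)\<^sup>2)"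
    unfolding coeff_on_one z norm_of_real power2_abs ..
  also have "\<dots> \<le> t\<^sup>2" using e unfolding exceptional_def by auto
  finally have "sqrt (\<Sum>y\<in>Q R x. (cmod (res R z (\<lambda>_. 1) y))\<^sup>2) \<le> sqrt (t\<^sup>2)"
    by (rule real_sqrt_le_mono)
  then show ?thesis unfolding L2_set_def using t by simp
qed

lemma res_norm_sq_le:
  assumes e: "e \<notin> exceptional R t" and t: "t > 0" and z: "Re z = e"
  shows "(res_norm R z)\<^sup>2 \<le> (\<Sum>k<K R. (v R k x)\<^sup>2 / (lam R k - e)\<^sup>2)"
proof -
  interpret symmetric_eigenbasis "Q R x" "A R" "K R" "lam R" "v R" by (rule symmetric_eigenbasis)
  have "(res_norm R z)\<^sup>2 = (\<Sum>y\<in>Q R x. (cmod (res R z \<delta> y))\<^sup>2)"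
    unfolding res_norm_def L2_set_def by (simp add: sum_nonneg)
  also have "\<dots> \<le> (\<Sum>k<K R. (cmod (coeff_on (Q R x) (v R k) \<delta>))\<^sup>2 / (lam R k - Re z)\<^sup>2)"
    by (rule sum_cmod_resolvent_sq_le) (use eigenvalue_ne_if_not_exceptional[OF e t] z in auto)
  also have "\<dots> = (\<Sum>k<K R. (v R k x)\<^sup>2 / (lam R k - e)\<^sup>2)"
    unfolding coeff_on_delta[OF mem_cluster] z norm_of_real power2_abs ..
  finally show ?thesis .
qed

text \<open>Passing from rank \<open>R\<close> to rank \<open>R + 1\<close> adds the constant \<open>p\<^sub>R\<^sub>+\<^sub>1 / N\<^sub>R\<^sub>+\<^sub>1\<close> on the
  whole block, a rank-one perturbation: the old resolvent column, extended by zero, solves the new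
  equation up to a multiple of the vector of ones.\<close>

lemma resolvent_delta_Suc_equation:
  assumes z: "Im z \<noteq> 0" and y: "y \<in> Q (Suc R) x"
  defines "c \<equiv> complex_of_real (p (Suc R) / real (NN n (Suc R))) * (\<Sum>y'\<in>Q R x. res R z \<delta> y')"
  shows "(\<Sum>y'\<in>Q (Suc R) x. complex_of_real (A (Suc R) y y') * res R z \<delta> y') - z * res R z \<delta> y = \<delta> y + c"
proof -
  interpret s: symmetric_eigenbasis "Q R x" "A R" "K R" "lam R" "v R" by (rule symmetric_eigenbasis)
  let ?\<psi> = "res R z \<delta>"
  have \<psi>0: "?\<psi> y' = 0" if "y' \<notin> Q R x" for y'
    using s.supported_on_resolvent that unfolding supported_on_def by blast
  have restrict: "(\<Sum>y'\<in>Q (Suc R) x. f y' * ?\<psi> y') = (\<Sum>y'\<in>Q R x. f y' * ?\<psi> y')" for f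
    by (rule sum.mono_neutral_right[OF finite_cluster cluster_subset_Suc]) (use \<psi>0 in auto)
  have "(\<Sum>y'\<in>Q (Suc R) x. complex_of_real (A (Suc R) y y') * ?\<psi> y')
      = (\<Sum>y'\<in>Q (Suc R) x. complex_of_real (A R y y') * ?\<psi> y'
          + complex_of_real (p (Suc R) / real (NN n (Suc R))) * ?\<psi> y')"
    using block_kernel_Suc[OF y] by (intro sum.cong refl) (simp add: distrib_right)
  also have "\<dots> = (\<Sum>y'\<in>Q R x. complex_of_real (A R y y') * ?\<psi> y') + c"
    unfolding sum.distrib c_def restrict by (simp add: sum_distrib_left)
  finally have split: "(\<Sum>y'\<in>Q (Suc R) x. complex_of_real (A (Suc R) y y') * ?\<psi> y')
      = (\<Sum>y'\<in>Q R x. complex_of_real (A R y y') * ?\<psi> y') + c" .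
  show ?thesis
  proof (cases "y \<in> Q R x")
    case True
    have "supported_on (Q R x) \<delta>" unfolding supported_on_def using mem_cluster by auto
    from s.resolvent_solves[OF z this True] show ?thesis unfolding split by (simp add: algebra_simps)
  next
    case False
    then show ?thesis unfolding split using block_kernel_eq_0[OF False] \<psi>0[OF False] mem_cluster
      by auto
  qed
qed

lemma resolvent_delta_Suc:
  fixes R :: nat
  assumes z: "Im z \<noteq> 0"
  defines "c \<equiv> complex_of_real (p (Suc R) / real (NN n (Suc R))) * (\<Sum>y'\<in>Q R x. res R z \<delta> y')"
  shows "res (Suc R) z \<delta> y = res R z \<delta> y - c * res (Suc R) z (\<lambda>_. 1) y"
proof -
  interpret s: symmetric_eigenbasis "Q R x" "A R" "K R" "lam R" "v R" by (rule symmetric_eigenbasis)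
  interpret s1: symmetric_eigenbasis "Q (Suc R) x" "A (Suc R)" "K (Suc R)" "lam (Suc R)" "v (Suc R)"
    by (rule symmetric_eigenbasis)
  have "supported_on (Q (Suc R) x) (res R z \<delta>)"
    using s.supported_on_resolvent cluster_subset_Suc unfolding supported_on_def by blast
  then have "res R z \<delta> y = res (Suc R) z (\<lambda>y. \<delta> y + c * 1) y"
    using s1.resolvent_unique[OF z] resolvent_delta_Suc_equation[OF z] unfolding c_def by simp
  also have "\<dots> = res (Suc R) z \<delta> y + c * res (Suc R) z (\<lambda>_. 1) y"
    by (rule resolvent_on_add)
  finally show ?thesis by simp
qed

lemma res_norm_Suc_le:
  assumes z: "Im z \<noteq> 0"
  shows "res_norm (Suc R) z \<le> res_norm R z + p (Suc R) / real (NN n (Suc R)) * (sqrt (real (NN n R)) * res_norm R z)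
            * L2_set (\<lambda>y. cmod (res (Suc R) z (\<lambda>_. 1) y)) (Q (Suc R) x)"
proof -
  interpret s: symmetric_eigenbasis "Q R x" "A R" "K R" "lam R" "v R" by (rule symmetric_eigenbasis)
  let ?\<psi> = "res R z \<delta>" and ?g = "res (Suc R) z (\<lambda>_. 1)" and ?q = "p (Suc R) / real (NN n (Suc R))"
  define c where "c = complex_of_real ?q * (\<Sum>y'\<in>Q R x. ?\<psi> y')"
  have "(\<Sum>y\<in>Q (Suc R) x. (cmod (?\<psi> y))\<^sup>2) = (\<Sum>y\<in>Q R x. (cmod (?\<psi> y))\<^sup>2)"
    using s.supported_on_resolvent unfolding supported_on_def
    by (intro sum.mono_neutral_right[OF finite_cluster cluster_subset_Suc]) auto
  then have \<psi>_norm: "L2_set (\<lambda>y. cmod (?\<psi> y)) (Q (Suc R) x) = res_norm R z"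
    unfolding L2_set_def res_norm_def by simp
  have "cmod (\<Sum>y\<in>Q R x. ?\<psi> y) \<le> (\<Sum>y\<in>Q R x. \<bar>cmod (?\<psi> y)\<bar> * \<bar>1\<bar>)" by (simp add: norm_sum)
  also have "\<dots> \<le> L2_set (\<lambda>y. cmod (?\<psi> y)) (Q R x) * L2_set (\<lambda>y. 1) (Q R x)" by (rule L2_set_mult_ineq)
  also have "\<dots> = res_norm R z * sqrt (real (NN n R))"
    unfolding L2_set_def res_norm_def using card_cluster by simp
  finally have sum_le: "cmod (\<Sum>y\<in>Q R x. ?\<psi> y) \<le> sqrt (real (NN n R)) * res_norm R z"
    by (simp add: mult.commute)
  have "?q \<ge> 0" using p_nonneg NN_pos by simp
  then have "cmod c = ?q * cmod (\<Sum>y\<in>Q R x. ?\<psi> y)"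
    unfolding c_def norm_mult norm_of_real by (simp only: abs_of_nonneg)
  then have c_le: "cmod c \<le> ?q * (sqrt (real (NN n R)) * res_norm R z)"
    using mult_left_mono[OF sum_le \<open>?q \<ge> 0\<close>] by simp
  have rep: "res (Suc R) z \<delta> y = ?\<psi> y - c * ?g y" for y
    using resolvent_delta_Suc[OF z] unfolding c_def by simp
  have "res_norm (Suc R) z \<le> L2_set (\<lambda>y. cmod (?\<psi> y) + cmod c * cmod (?g y)) (Q (Suc R) x)"
    unfolding res_norm_def rep by (rule L2_set_mono) (auto simp flip: norm_mult intro: norm_triangle_ineq4)
  also have "\<dots> \<le> L2_set (\<lambda>y. cmod (?\<psi> y)) (Q (Suc R) x) + L2_set (\<lambda>y. cmod c * cmod (?g y)) (Q (Suc R) x)"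
    by (rule L2_set_triangle_ineq)
  also have "L2_set (\<lambda>y. cmod c * cmod (?g y)) (Q (Suc R) x) = cmod c * L2_set (\<lambda>y. cmod (?g y)) (Q (Suc R) x)"
    by (rule L2_set_right_distrib[symmetric]) simp
  finally show ?thesis
    using mult_right_mono[OF c_le L2_set_nonneg[of "\<lambda>y. cmod (?g y)" "Q (Suc R) x"]]
    unfolding \<psi>_norm by simp
qed

lemma Green_eq_resolvent:
  fixes R :: nat
  assumes z: "Im z \<noteq> 0"
    and eq: "\<forall>y. Hop P n p \<omega> \<phi> y - z * \<phi> y = \<delta> y"
    and bounded: "\<forall>y. cmod (\<phi> y) \<le> B"
  defines "c \<equiv> \<Sum>i. complex_of_real (p (i + Suc R)) * Eop P n (i + Suc R) \<phi> x"
  shows "\<phi> x = res R z \<delta> x - c * res R z (\<lambda>_. 1) x"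
proof -
  interpret s: symmetric_eigenbasis "Q R x" "A R" "K R" "lam R" "v R" by (rule symmetric_eigenbasis)
  define f where "f y = (if y \<in> Q R x then \<phi> y else 0)" for y
  have "\<forall>y\<in>Q R x. (\<Sum>y'\<in>Q R x. complex_of_real (A R y y') * f y') - z * f y = \<delta> y + (- c) * 1"
  proof
    fix y assume y: "y \<in> Q R x"
    have "(\<Sum>y'\<in>Q R x. complex_of_real (A R y y') * f y') = (\<Sum>y'\<in>Q R x. complex_of_real (A R y y') * \<phi> y')"
      unfolding f_def by (intro sum.cong refl) auto
    then show "(\<Sum>y'\<in>Q R x. complex_of_real (A R y y') * f y') - z * f y = \<delta> y + (- c) * 1"
      using eq[rule_format, of y] Hop_eq_block_kernel_plus_const[OF bounded y] y
      unfolding c_def f_def by (simp add: algebra_simps)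
  qed
  moreover have "supported_on (Q R x) f" unfolding supported_on_def f_def by auto
  ultimately have "f x = res R z (\<lambda>y. \<delta> y + (- c) * 1) x"
    by (intro s.resolvent_unique[OF z]) simp_all
  then show ?thesis unfolding resolvent_on_add f_def using mem_cluster by simp
qed

lemma Im_Green_le:
  assumes z: "Im z \<noteq> 0"
    and eq: "\<forall>y. Hop P n p \<omega> \<phi> y - z * \<phi> y = \<delta> y"
    and bounded: "\<forall>y. cmod (\<phi> y) \<le> B"
  shows "Im (\<phi> x) \<le> Im z * (res_norm R z)\<^sup>2
           + B * (\<Sum>i. p (i + Suc R)) * L2_set (\<lambda>y. cmod (res R z (\<lambda>_. 1) y)) (Q R x)"
proof -
  interpret s: symmetric_eigenbasis "Q R x" "A R" "K R" "lam R" "v R" by (rule symmetric_eigenbasis)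
  define c where "c = (\<Sum>i. complex_of_real (p (i + Suc R)) * Eop P n (i + Suc R) \<phi> x)"
  have Im_res: "Im (res R z \<delta> x) = Im z * (res_norm R z)\<^sup>2"
    unfolding s.Im_resolvent_delta[OF mem_cluster] res_norm_def L2_set_def by (simp add: sum_nonneg)
  have "cmod (c * res R z (\<lambda>_. 1) x)
      \<le> B * (\<Sum>i. p (i + Suc R)) * L2_set (\<lambda>y. cmod (res R z (\<lambda>_. 1) y)) (Q R x)"
    unfolding norm_mult c_def
    using norm_tail_Eop_le[OF bounded] member_le_L2_set[OF finite_cluster mem_cluster] tail_weights_nonneg
      order_trans[OF norm_ge_zero bounded[rule_format, of x]]
    by (intro mult_mono) auto
  moreover have "- Im (c * res R z (\<lambda>_. 1) x) \<le> cmod (c * res R z (\<lambda>_. 1) x)"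
    by (rule abs_le_D2[OF abs_Im_le_cmod])
  ultimately show ?thesis
    unfolding Green_eq_resolvent[OF z eq bounded, of R, folded c_def] Im_res[symmetric] by simp
qed

end

section \<open>Almost every energy is eventually non-exceptional\<close>

lemma filterlim_at_top_if_summable_inverse:
  fixes u :: "nat \<Rightarrow> real"
  assumes "\<forall>r. u r > 0" "summable (\<lambda>r. 1 / u (Suc r))"
  shows "filterlim u at_top sequentially"
proof -
  have "filterlim (\<lambda>r. inverse (1 / u (Suc r))) at_top sequentially"
    using assms by (intro filterlim_inverse_at_top summable_LIMSEQ_zero) auto
  then show ?thesis using filterlim_sequentially_Suc[of u] by simp
qed

lemma exists_later_future_minimum:
  fixes u :: "nat \<Rightarrow> real"
  assumes "filterlim u at_top sequentially"
  shows "\<exists>R\<ge>m. \<forall>s\<ge>R. u R \<le> u s"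
proof -
  obtain S where S: "\<forall>s\<ge>S. u m < u s"
    using assms unfolding filterlim_at_top_dense eventually_sequentially by blast
  define S' where "S' = max m S"
  have "finite (u ` {m..S'})" "u ` {m..S'} \<noteq> {}" unfolding S'_def by auto
  then have "Min (u ` {m..S'}) \<in> u ` {m..S'}" by (rule Min_in)
  then obtain R where R: "R \<in> {m..S'}" "u R = Min (u ` {m..S'})" by (metis imageE)
  then have min: "u R \<le> u s" if "s \<in> {m..S'}" for s using that by simp
  have "u R \<le> u s" if "R \<le> s" for s
  proof (cases "s \<le> S'")
    case True then show ?thesis using min R(1) that by simp
  next
    case False
    then have "u m < u s" using S unfolding S'_def by simp
    moreover have "u R \<le> u m" using min[of m] unfolding S'_def by simp
    ultimately show ?thesis by simp
  qed
  then show ?thesis using R(1) by auto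
qed

lemma bounded_if_l2:
  assumes "l2 \<phi>" shows "\<exists>B. \<forall>y. cmod (\<phi> y) \<le> B"
proof -
  let ?f = "\<lambda>y. (cmod (\<phi> y))\<^sup>2"
  have "?f y \<le> infsum ?f UNIV" for y
    using finite_sum_le_infsum[of ?f UNIV "{y}"] assms unfolding l2_def by simp
  then have "cmod (\<phi> y) \<le> sqrt (infsum ?f UNIV)" for y
    using real_sqrt_le_mono[of "?f y"] by fastforce
  then show ?thesis by blast
qed

locale growth_sequence = cluster_eigenbases P n p \<omega> x K lam v
  for P :: "nat \<Rightarrow> 'x set set" and n p \<omega> x K lam v +
  fixes u :: "nat \<Rightarrow> real"
  assumes u_pos: "\<forall>r. u r > 0"
    and summable_inverse_u: "summable (\<lambda>r. 1 / u (Suc r))"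
    and growth_summable: "summable (\<lambda>r. p (Suc r) * real (NN n r) * u r * u (Suc r))"
begin

definition threshold :: "nat \<Rightarrow> real" where
  "threshold R = real (NN n R) * u R"

definition growth :: "nat \<Rightarrow> real" where
  "growth r = p (Suc r) * real (NN n r) * u r * u (Suc r)"

definition good_from :: "real \<Rightarrow> nat \<Rightarrow> bool" where
  "good_from e R0 \<longleftrightarrow> (\<forall>R\<ge>R0. e \<notin> exceptional R (threshold R) \<and> u R \<ge> 1)"

lemma summable_growth: "summable growth"
  unfolding growth_def by (rule growth_summable)

lemma threshold_pos: "threshold R > 0"
  unfolding threshold_def using NN_pos u_pos by simp

lemma growth_nonneg: "growth r \<ge> 0"
  unfolding growth_def using p_nonneg u_pos by (simp add: less_imp_le)

lemma u_to_infinity: "filterlim u at_top sequentially"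
  by (rule filterlim_at_top_if_summable_inverse[OF u_pos summable_inverse_u])

lemma emeasure_exceptional_threshold_le: "emeasure lborel (exceptional R (threshold R)) \<le> ennreal (4 / u R)"
proof -
  have "4 * real (NN n R) / threshold R = 4 / u R" using NN_pos[of R] u_pos unfolding threshold_def by simp
  then show ?thesis using emeasure_exceptional_le[OF threshold_pos[of R], where R = R] by simp
qed

lemma AE_good_from: "AE e in lborel. \<exists>R0. good_from e R0"
proof -
  have measure_le: "measure lborel (exceptional R (threshold R)) \<le> 4 / u R" for R
    using emeasure_exceptional_threshold_le u_pos unfolding measure_def
    by (intro enn2real_leI) (simp_all add: less_imp_le)
  have "summable (\<lambda>R. 1 / u R)"
    using summable_inverse_u summable_Suc_iff[of "\<lambda>R. 1 / u R"] by simp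
  then have "summable (\<lambda>R. 4 * (1 / u R))" by (rule summable_mult)
  then have "summable (\<lambda>R. measure lborel (exceptional R (threshold R)))"
    by (rule summable_comparison_test[rotated]) (use measure_le in simp)
  then have "AE e in lborel. eventually (\<lambda>R. e \<in> space lborel - exceptional R (threshold R)) sequentially"
  proof (rule borel_cantelli_AE1[rotated 2])
    show "emeasure lborel (exceptional R (threshold R)) < \<infinity>" for R
      using emeasure_exceptional_threshold_le[of R] by (simp add: le_less_trans)
  qed (rule exceptional_sets)
  then show ?thesis
  proof (rule eventually_mono)
    fix e assume "eventually (\<lambda>R. e \<in> space lborel - exceptional R (threshold R)) sequentially"
    moreover have "eventually (\<lambda>R. u R \<ge> 1) sequentially"
      using u_to_infinity by (simp add: filterlim_at_top)
    ultimately have "eventually (\<lambda>R. e \<notin> exceptional R (threshold R) \<and> u R \<ge> 1) sequentially"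
      by (rule eventually_elim2) simp
    then show "\<exists>R0. good_from e R0" unfolding good_from_def eventually_sequentially .
  qed
qed

section \<open>Bounds on the Green function at good energies\<close>

lemma res_norm_Suc_le_growth:
  assumes e: "e \<notin> exceptional (Suc m) (threshold (Suc m))" and u: "u m \<ge> 1"
    and z: "Im z \<noteq> 0" "Re z = e"
  shows "res_norm (Suc m) z \<le> res_norm m z * (1 + growth m)"
proof -
  let ?N = "real (NN n m)" and ?L = "res_norm m z"
  have N: "?N \<ge> 1" using NN_pos[of m] by simp
  have L: "?L \<ge> 0" unfolding res_norm_def by simp
  have coeff: "p (Suc m) / real (NN n (Suc m)) * (sqrt ?N * ?L) * threshold (Suc m)
      = p (Suc m) * sqrt ?N * u (Suc m) * ?L"
    unfolding threshold_def using NN_pos[of "Suc m"] by (simp add: field_simps)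
  have "sqrt ?N \<le> ?N"
    using N real_sqrt_le_mono[of ?N "?N * ?N"] by (simp add: mult_le_cancel_left1)
  also have "\<dots> \<le> ?N * u m" using N u by simp
  finally have "p (Suc m) * sqrt ?N * u (Suc m) * ?L \<le> p (Suc m) * (?N * u m) * u (Suc m) * ?L"
    using p_nonneg u_pos L by (intro mult_right_mono mult_left_mono) (auto simp: less_imp_le)
  moreover have "p (Suc m) / real (NN n (Suc m)) * (sqrt ?N * ?L)
      * L2_set (\<lambda>y. cmod (res (Suc m) z (\<lambda>_. 1) y)) (Q (Suc m) x)
      \<le> p (Suc m) / real (NN n (Suc m)) * (sqrt ?N * ?L) * threshold (Suc m)"
    using norm_resolvent_ones_le[OF e threshold_pos z(2)] p_nonneg L by (intro mult_left_mono) auto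
  ultimately have "res_norm (Suc m) z \<le> ?L + p (Suc m) * (?N * u m) * u (Suc m) * ?L"
    using res_norm_Suc_le[OF z(1), of m] coeff by linarith
  then show ?thesis unfolding growth_def by (simp add: algebra_simps)
qed

lemma res_norm_le_exp:
  assumes good: "good_from e R0" and z: "Im z \<noteq> 0" "Re z = e" and R: "R0 \<le> R"
  shows "res_norm R z \<le> sqrt (\<Sum>k<K R0. (v R0 k x)\<^sup>2 / (lam R0 k - e)\<^sup>2) * exp (\<Sum>r\<in>{R0..<R}. growth r)"
  using R
proof (induction R rule: dec_induct)
  case base
  have "(res_norm R0 z)\<^sup>2 \<le> (\<Sum>k<K R0. (v R0 k x)\<^sup>2 / (lam R0 k - e)\<^sup>2)"
    using good threshold_pos z unfolding good_from_def by (intro res_norm_sq_le) auto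
  then show ?case using real_sqrt_le_mono res_norm_def by fastforce
next
  case (step m)
  have "res_norm (Suc m) z \<le> res_norm m z * (1 + growth m)"
    using good step.hyps z unfolding good_from_def by (intro res_norm_Suc_le_growth) auto
  also have "\<dots> \<le> res_norm m z * exp (growth m)"
    unfolding res_norm_def by (intro mult_left_mono) (auto simp: add.commute exp_ge_add_one_self)
  also have "\<dots> \<le> sqrt (\<Sum>k<K R0. (v R0 k x)\<^sup>2 / (lam R0 k - e)\<^sup>2) * exp (\<Sum>r\<in>{R0..<m}. growth r) * exp (growth m)"
    by (rule mult_right_mono[OF step.IH]) simp
  finally show ?case using step.hyps by (simp add: exp_add)
qed

lemma tail_weights_threshold_le:
  assumes min: "\<forall>s\<ge>R. u R \<le> u s" and ge_1: "\<forall>s\<ge>R. u s \<ge> 1"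
  shows "(\<Sum>i. p (i + Suc R)) * threshold R \<le> (\<Sum>i. growth (i + R))"
proof -
  have "summable (\<lambda>i. p (i + Suc R))" by (rule summable_ignore_initial_segment[OF summable_p])
  then have "(\<Sum>i. p (i + Suc R)) * threshold R = (\<Sum>i. p (i + Suc R) * threshold R)"
    by (rule suminf_mult2)
  also have "\<dots> \<le> (\<Sum>i. growth (i + R))"
  proof (rule suminf_le)
    fix i
    have "real (NN n R) \<le> real (NN n (i + R))" using NN_mono[of R "i + R"] by simp
    then have "p (i + Suc R) * threshold R \<le> p (Suc (i + R)) * (real (NN n (i + R)) * u (i + R))"
      unfolding threshold_def using min p_nonneg u_pos
      by (intro mult_left_mono mult_mono) (auto simp: less_imp_le)
    also have "\<dots> \<le> p (Suc (i + R)) * (real (NN n (i + R)) * u (i + R)) * u (Suc (i + R))"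
    proof -
      have "p (Suc (i + R)) * (real (NN n (i + R)) * u (i + R)) \<ge> 0"
        using p_nonneg u_pos by (simp add: less_imp_le)
      then show ?thesis using mult_left_mono[of 1 "u (Suc (i + R))"] ge_1 by simp
    qed
    finally show "p (i + Suc R) * threshold R \<le> growth (i + R)" unfolding growth_def by (simp add: mult.assoc)
  next
    show "summable (\<lambda>i. p (i + Suc R) * threshold R)"
      by (rule summable_mult2) fact
    show "summable (\<lambda>i. growth (i + R))" by (rule summable_ignore_initial_segment[OF summable_growth])
  qed
  finally show ?thesis .
qed

abbreviation (input) Green_bound :: "real \<Rightarrow> nat \<Rightarrow> real" where
  "Green_bound e R0 \<equiv> sqrt (\<Sum>k<K R0. (v R0 k x)\<^sup>2 / (lam R0 k - e)\<^sup>2) * exp (suminf growth)"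

lemma res_norm_le_Green_bound:
  assumes "good_from e R0" "Im z \<noteq> 0" "Re z = e" "R0 \<le> R"
  shows "res_norm R z \<le> Green_bound e R0"
proof -
  have "(\<Sum>r\<in>{R0..<R}. growth r) \<le> suminf growth"
    using sum_le_suminf[OF summable_growth] growth_nonneg by simp
  then have "sqrt (\<Sum>k<K R0. (v R0 k x)\<^sup>2 / (lam R0 k - e)\<^sup>2) * exp (\<Sum>r\<in>{R0..<R}. growth r) \<le> Green_bound e R0"
    by (intro mult_left_mono real_sqrt_ge_zero sum_nonneg) simp_all
  with res_norm_le_exp[OF assms] show ?thesis by linarith
qed

lemma Im_Green_le_at_future_minimum:
  assumes good: "good_from e R0" and \<epsilon>: "\<epsilon> > 0"
    and eq: "\<forall>y. Hop P n p \<omega> \<phi> y - Complex e \<epsilon> * \<phi> y = \<delta> y"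
    and bounded: "\<forall>y. cmod (\<phi> y) \<le> B"
    and R: "R0 \<le> R" and min: "\<forall>s\<ge>R. u R \<le> u s"
  shows "Im (\<phi> x) \<le> \<epsilon> * (Green_bound e R0)\<^sup>2 + B * (\<Sum>i. growth (i + R))"
proof -
  define z where "z = Complex e \<epsilon>"
  have z: "Im z \<noteq> 0" "Re z = e" "Im z = \<epsilon>" unfolding z_def using \<epsilon> by auto
  have B: "B \<ge> 0" using bounded[rule_format, of x] norm_ge_zero[of "\<phi> x"] by linarith
  have e: "e \<notin> exceptional R (threshold R)" and ge_1: "\<forall>s\<ge>R. u s \<ge> 1"
    using good R unfolding good_from_def by auto
  have "Im (\<phi> x) \<le> \<epsilon> * (res_norm R z)\<^sup>2
      + B * ((\<Sum>i. p (i + Suc R)) * L2_set (\<lambda>y. cmod (res R z (\<lambda>_. 1) y)) (Q R x))"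
    using Im_Green_le[OF z(1) _ bounded] eq unfolding z_def by (simp add: mult.assoc)
  also have "\<dots> \<le> \<epsilon> * (Green_bound e R0)\<^sup>2 + B * ((\<Sum>i. p (i + Suc R)) * threshold R)"
    using res_norm_le_Green_bound[OF good z(1,2) R] norm_resolvent_ones_le[OF e threshold_pos z(2)]
      \<epsilon> B tail_weights_nonneg
    by (intro add_mono mult_left_mono power_mono) (auto simp: res_norm_def)
  also have "\<dots> \<le> \<epsilon> * (Green_bound e R0)\<^sup>2 + B * (\<Sum>i. growth (i + R))"
    using tail_weights_threshold_le[OF min ge_1] B by (simp add: mult_left_mono)
  finally show ?thesis .
qed

text \<open>The tail of \<open>growth\<close> tends to zero, and \<open>u\<close> attains its future minimum at
  arbitrarily late ranks.\<close>

lemma Im_Green_le_epsilon: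
  assumes good: "good_from e R0" and \<epsilon>: "\<epsilon> > 0"
    and eq: "\<forall>y. Hop P n p \<omega> \<phi> y - Complex e \<epsilon> * \<phi> y = \<delta> y"
    and bounded: "\<forall>y. cmod (\<phi> y) \<le> B"
  shows "Im (\<phi> x) \<le> \<epsilon> * (Green_bound e R0)\<^sup>2"
proof (rule field_le_epsilon)
  fix d :: real assume "d > 0"
  have "(\<lambda>R. B * (\<Sum>i. growth (i + R))) \<longlonglongrightarrow> 0"
    by (intro tendsto_mult_right_zero suminf_exist_split2 summable_growth)
  then obtain m where m: "\<forall>R\<ge>m. norm (B * (\<Sum>i. growth (i + R)) - 0) < d"
    using LIMSEQ_D \<open>d > 0\<close> by blast
  obtain R where R: "R \<ge> max m R0" "\<forall>s\<ge>R. u R \<le> u s"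
    using exists_later_future_minimum[OF u_to_infinity] by blast
  then have "B * (\<Sum>i. growth (i + R)) < d" using m by auto
  moreover have "Im (\<phi> x) \<le> \<epsilon> * (Green_bound e R0)\<^sup>2 + B * (\<Sum>i. growth (i + R))"
    using Im_Green_le_at_future_minimum[OF assms] R by simp
  ultimately show "Im (\<phi> x) \<le> \<epsilon> * (Green_bound e R0)\<^sup>2 + d" by linarith
qed

lemma nn_integral_inverse_square_finite_if_good:
  assumes "spectral_measure P n p \<omega> x \<mu>" and good: "good_from e R0"
  shows "(\<integral>\<^sup>+ l. (if l = e then \<infinity> else ennreal (1 / (e - l)\<^sup>2)) \<partial>\<mu>) < \<infinity>"
proof (rule nn_integral_inverse_square_finite)
  show "finite_measure \<mu>" "sets \<mu> = sets borel"
    using assms(1) prob_space.finite_measure unfolding spectral_measure_def by auto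
  fix k :: nat
  have "Im (Complex e (1 / Suc k)) \<noteq> 0" by simp
  then obtain \<phi> where "Hdom \<omega> \<phi>" and eq: "\<forall>y. Hop P n p \<omega> \<phi> y - Complex e (1 / Suc k) * \<phi> y = \<delta> y"
    and "\<phi> x = (\<integral>l. 1 / (complex_of_real l - Complex e (1 / Suc k)) \<partial>\<mu>)"
    using assms(1) unfolding spectral_measure_def by blast
  moreover obtain B where "\<forall>y. cmod (\<phi> y) \<le> B"
    using bounded_if_l2 \<open>Hdom \<omega> \<phi>\<close> unfolding Hdom_def by blast
  ultimately show "Im (\<integral>l. 1 / (complex_of_real l - Complex e (1 / Suc k)) \<partial>\<mu>)
      \<le> 1 / Suc k * (Green_bound e R0)\<^sup>2"
    using Im_Green_le_epsilon[OF good _ eq] by simp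
qed

end

theorem mainTheorem7:
  fixes P :: "nat \<Rightarrow> ('x::countable) set set" and n :: "nat \<Rightarrow> nat"
    and p u :: "nat \<Rightarrow> real" and \<omega> :: "'x \<Rightarrow> real" and x :: 'x and \<mu> :: "real measure"
  assumes "hierarchical_structure P n"
    and "weights_ok p"
    and "\<forall>r. u r > 0"
    and "summable (\<lambda>r. 1 / u (Suc r))"
    and "summable (\<lambda>r. p (Suc r) * real (NN n r) * u r * u (Suc r))"
    and "spectral_measure P n p \<omega> x \<mu>"
  shows "AE e in lborel.
           (\<integral>\<^sup>+ l. (if l = e then \<infinity> else ennreal (1 / (e - l)\<^sup>2)) \<partial>\<mu>) < \<infinity>"
proof -
  interpret hierarchical_hamiltonian P n p \<omega>
    by unfold_locales (fact assms)+
  obtain K lam v where "\<forall>R. eigenbasis_on (Q R x) (A R) (K R) (lam R) (v R)"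
    using ex_cluster_eigenbases by blast
  then interpret growth_sequence P n p \<omega> x K lam v u
    by unfold_locales (use assms in auto)
  show ?thesis
    using AE_good_from by (rule eventually_mono)
      (use nn_integral_inverse_square_finite_if_good[OF assms(6)] in blast)
qed

end
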